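(* Let $n\ge2$, $0<m\le L$, $\kappa=L/m$, let $\rho\in(0,1)$ satisfy $1/(1-\rho)\in[\sqrt{3\kappa+1}/2,(\kappa+1)/2]$, let $c\in[0,1/2]$ be the solution of $\kappa(1-\rho)\big(1-c\rho-c^2(1+\rho)\big)=(1+\rho)\big(1-c\rho-c^2(1-\rho)\big)$, and consider the two-step momentum algorithm with parameters $\alpha=(1+\rho)(1+c-c\rho)/(L(1+c))$, $\gamma=\beta=c\rho^2/\big((\alpha L-1)(1+c)\big)$. Then $$J_{\max}=(n-1)\hat J(m)+\hat J(L),\qquad J_{\min}=\hat J(m)+\hat J(L)+(n-2)\hat J(1/\alpha),$$ where $\hat J(m)=\dfrac{\sigma_w^2(1-c)^2(r\kappa+1)}{2(1-c-c\rho^2)(1+\rho)(1-c+c\rho)}$, $\hat J(L)=\dfrac{\sigma_w^2(1+c)^2(1+c-c\rho^2)}{(1-\rho^2)(1+c-c\rho)(1+c+c\rho)(1+c+c\rho^2)}$, $\hat J(1/\alpha)=\sigma_w^2$, and $r=\dfrac{(1+c)(1-c+c\rho)}{(1-c)(1+c-c\rho)}$.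
   Context: $\mathcal{Q}_m^L$ is the class of quadratic functions $f(x)=\tfrac12x^TQx-q^Tx$ on $\mathbb{R}^n$ with $q\in\mathbb{R}^n$, $Q=Q^T\succ0$ whose largest eigenvalue is $L$ and smallest is $m$; $x^\star$ is the minimizer. The noisy two-step momentum algorithm is $x^{t+2}=x^{t+1}+\beta(x^{t+1}-x^t)-\alpha\nabla f\big(x^{t+1}+\gamma(x^{t+1}-x^t)\big)+\sigma_w w^t$, with $w^t$ white noise, $\mathbb{E}[w^t]=0$, $\mathbb{E}[w^t(w^\tau)^T]=I\delta(t-\tau)$, $\sigma_w\ge0$. For $\lambda>0$ let $a(\lambda)=\beta-\gamma\alpha\lambda$, $b(\lambda)=(1+\gamma)\alpha\lambda-(1+\beta)$, $d=a+b+1$, $l=a-b+1$, $h=1-a$, and $\hat J(\lambda)=\sigma_w^2(d+l)/(2dhl)$ (evaluated at $\lambda$). Noise amplification $J=\lim_{t\to\infty}\frac1t\sum_{k=0}^t\mathbb{E}\|x^k-x^\star\|_2^2$; $J_{\max}=\max_{f\in\mathcal{Q}_m^L}J$, $J_{\min}=\min_{f\in\mathcal{Q}_m^L}J$. *)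

theory Defs
  imports "HOL-Probability.Probability"
begin

definition quad_fun :: "real^'n^'n \<Rightarrow> real^'n \<Rightarrow> real^'n \<Rightarrow> real" where
  "quad_fun Q q x = (1/2) * (x \<bullet> (Q *v x)) - q \<bullet> x"

definition quad_grad :: "real^'n^'n \<Rightarrow> real^'n \<Rightarrow> real^'n \<Rightarrow> real^'n" where
  "quad_grad Q q x = Q *v x - q"

definition quad_xstar :: "real^'n^'n \<Rightarrow> real^'n \<Rightarrow> real^'n" where
  "quad_xstar Q q = (SOME x. \<forall>y. quad_fun Q q x \<le> quad_fun Q q y)"

definition is_eigenvalue :: "real^'n^'n \<Rightarrow> real \<Rightarrow> bool" where
  "is_eigenvalue Q lam \<longleftrightarrow> (\<exists>v. v \<noteq> 0 \<and> Q *v v = lam *\<^sub>R v)"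

definition quad_class :: "real \<Rightarrow> real \<Rightarrow> ((real^'n^'n) \<times> (real^'n)) set" where
  "quad_class m L = {(Q, q). transpose Q = Q
      \<and> (\<forall>x. x \<noteq> 0 \<longrightarrow> x \<bullet> (Q *v x) > 0)
      \<and> is_eigenvalue Q L \<and> (\<forall>lam. is_eigenvalue Q lam \<longrightarrow> lam \<le> L)
      \<and> is_eigenvalue Q m \<and> (\<forall>lam. is_eigenvalue Q lam \<longrightarrow> m \<le> lam)}"

definition white_noise :: "'a measure \<Rightarrow> (nat \<Rightarrow> 'a \<Rightarrow> real^'n) \<Rightarrow> bool" where
  "white_noise M w \<longleftrightarrow> prob_space M
     \<and> (\<forall>t. w t \<in> borel_measurable M)
     \<and> (\<forall>t i. integrable M (\<lambda>\<omega>. w t \<omega> $ i) \<and> integral\<^sup>L M (\<lambda>\<omega>. w t \<omega> $ i) = 0)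
     \<and> (\<forall>t s i j. integrable M (\<lambda>\<omega>. w t \<omega> $ i * w s \<omega> $ j)
           \<and> integral\<^sup>L M (\<lambda>\<omega>. w t \<omega> $ i * w s \<omega> $ j) = (if t = s \<and> i = j then 1 else 0))"

fun mom_iter :: "real \<Rightarrow> real \<Rightarrow> real \<Rightarrow> real \<Rightarrow> real^'n^'n \<Rightarrow> real^'n
    \<Rightarrow> (nat \<Rightarrow> 'a \<Rightarrow> real^'n) \<Rightarrow> real^'n \<Rightarrow> real^'n \<Rightarrow> nat \<Rightarrow> 'a \<Rightarrow> real^'n" where
  "mom_iter \<alpha> \<beta> \<gamma> \<sigma> Q q w x0 x1 0 \<omega> = x0"
| "mom_iter \<alpha> \<beta> \<gamma> \<sigma> Q q w x0 x1 (Suc 0) \<omega> = x1"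
| "mom_iter \<alpha> \<beta> \<gamma> \<sigma> Q q w x0 x1 (Suc (Suc t)) \<omega> =
     (let y = mom_iter \<alpha> \<beta> \<gamma> \<sigma> Q q w x0 x1 (Suc t) \<omega>;
          z = mom_iter \<alpha> \<beta> \<gamma> \<sigma> Q q w x0 x1 t \<omega>
      in y + \<beta> *\<^sub>R (y - z) - \<alpha> *\<^sub>R quad_grad Q q (y + \<gamma> *\<^sub>R (y - z)) + \<sigma> *\<^sub>R w t \<omega>)"

definition noise_avg :: "'a measure \<Rightarrow> real \<Rightarrow> real \<Rightarrow> real \<Rightarrow> real \<Rightarrow> real^'n^'n \<Rightarrow> real^'n
    \<Rightarrow> (nat \<Rightarrow> 'a \<Rightarrow> real^'n) \<Rightarrow> real^'n \<Rightarrow> real^'n \<Rightarrow> nat \<Rightarrow> real" where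
  "noise_avg M \<alpha> \<beta> \<gamma> \<sigma> Q q w x0 x1 t =
     (1 / real t) * (\<Sum>k\<le>t. integral\<^sup>L M
        (\<lambda>\<omega>. (norm (mom_iter \<alpha> \<beta> \<gamma> \<sigma> Q q w x0 x1 k \<omega> - quad_xstar Q q))\<^sup>2))"

definition noise_amp :: "'a measure \<Rightarrow> real \<Rightarrow> real \<Rightarrow> real \<Rightarrow> real \<Rightarrow> real^'n^'n \<Rightarrow> real^'n
    \<Rightarrow> (nat \<Rightarrow> 'a \<Rightarrow> real^'n) \<Rightarrow> real^'n \<Rightarrow> real^'n \<Rightarrow> real" where
  "noise_amp M \<alpha> \<beta> \<gamma> \<sigma> Q q w x0 x1 = lim (noise_avg M \<alpha> \<beta> \<gamma> \<sigma> Q q w x0 x1)"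

definition Jhat :: "real \<Rightarrow> real \<Rightarrow> real \<Rightarrow> real \<Rightarrow> real \<Rightarrow> real" where
  "Jhat \<alpha> \<beta> \<gamma> \<sigma> lam =
     (let a = \<beta> - \<gamma> * \<alpha> * lam;
          b = (1 + \<gamma>) * \<alpha> * lam - (1 + \<beta>);
          d = a + b + 1; l = a - b + 1; h = 1 - a
      in \<sigma>\<^sup>2 * (d + l) / (2 * d * h * l))"

end

theory Submission
  imports Defs
begin

(*
  Along an eigenvector of Q with eigenvalue \<lambda>, the error of the noisy momentum iteration is a
  scalar second-order recurrence with characteristic polynomial z\<^sup>2 + b(\<lambda>) z + a(\<lambda>), driven
  by unit white noise.  When this polynomial is Schur stable, a quadratic Lyapunov function shows
  that the second moment of the mode tends to \<sigma>\<^sup>2 times the energy of the impulse response, which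
  is Jhat(\<lambda>); by Parseval and a Cesaro argument, J is the sum of Jhat over the spectrum of Q.

  For the tuned parameters, Jhat is a rational function of u = \<alpha> \<lambda> - 1 on [\<alpha> m - 1, \<alpha> L - 1];
  it is largest at \<lambda> = m and smallest at \<lambda> = 1/\<alpha>, where a = b = 0 and Jhat = \<sigma>\<^sup>2.  Every
  matrix of the class has both m and L as eigenvalues, which gives the two bounds, and diagonal
  matrices with the remaining eigenvalues at m, respectively 1/\<alpha>, attain them.
*)

section \<open>Orthonormal eigenbases of symmetric matrices\<close>

lemma symmetric_matrix_inner:
  fixes Q :: "real^'n^'n"
  assumes "transpose Q = Q"
  shows "(Q *v x) \<bullet> y = x \<bullet> (Q *v y)"
  by (metis assms dot_lmul_matrix transpose_matrix_vector)

lemma linear_le_quadratic_imp_zero: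
  fixes g K :: real
  assumes "\<And>t. 2 * t * g \<le> t\<^sup>2 * K"
  shows "g = 0"
proof -
  define s where "s = 1 / (\<bar>K\<bar> + 1)"
  have s: "s > 0" "s * K \<le> 1"
    by (simp_all add: s_def field_simps add_pos_nonneg)
  have "s * (2 * g\<^sup>2) \<le> s * (s * K * g\<^sup>2)"
    using assms[of "s * g"] by (simp add: power2_eq_square mult_ac)
  hence "2 * g\<^sup>2 \<le> s * K * g\<^sup>2" using s(1) by simp
  also have "\<dots> \<le> g\<^sup>2" using s(2) mult_right_mono[of "s * K" 1 "g\<^sup>2"] by simp
  finally show ?thesis by simp
qed

text \<open>First-order condition at a maximiser \<open>v\<close> of the Rayleigh quotient along the line \<open>v + t u\<close>.\<close>
lemma rayleigh_max_orthogonal: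
  fixes Q :: "real^'n^'n"
  assumes sym: "transpose Q = Q"
    and v1: "norm v = 1" and uv: "u \<bullet> v = 0"
    and max: "\<And>t. (v + t *\<^sub>R u) \<bullet> (Q *v (v + t *\<^sub>R u)) \<le> (v \<bullet> (Q *v v)) * (norm (v + t *\<^sub>R u))\<^sup>2"
  shows "u \<bullet> (Q *v v) = 0"
proof (rule linear_le_quadratic_imp_zero)
  have vu: "v \<bullet> (Q *v u) = u \<bullet> (Q *v v)"
    using symmetric_matrix_inner[OF sym, of u v] by (simp add: inner_commute)
  have vv: "v \<bullet> v = 1" using v1 by (simp add: dot_square_norm)
  fix t
  have "(v + t *\<^sub>R u) \<bullet> (Q *v (v + t *\<^sub>R u))
      = v \<bullet> (Q *v v) + 2 * t * (u \<bullet> (Q *v v)) + t\<^sup>2 * (u \<bullet> (Q *v u))"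
    by (simp add: matrix_vector_right_distrib inner_add_left inner_add_right vu
        power2_eq_square algebra_simps)
  moreover have "(norm (v + t *\<^sub>R u))\<^sup>2 = 1 + t\<^sup>2 * (u \<bullet> u)"
    unfolding power2_norm_eq_inner
    by (simp add: inner_add_left inner_add_right vv uv inner_commute[of v u] power2_eq_square)
  ultimately show "2 * t * (u \<bullet> (Q *v v)) \<le> t\<^sup>2 * ((v \<bullet> (Q *v v)) * (u \<bullet> u) - u \<bullet> (Q *v u))"
    using max[of t] by (simp add: algebra_simps)
qed

lemma invariant_subspace_unit_eigenvector:
  fixes Q :: "real^'n^'n"
  assumes sym: "transpose Q = Q" and S: "subspace S" and inv: "\<And>x. x \<in> S \<Longrightarrow> Q *v x \<in> S"
    and x: "x \<in> S" "x \<noteq> 0"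
  obtains v where "v \<in> S" "norm v = 1" "Q *v v = (v \<bullet> (Q *v v)) *\<^sub>R v"
proof -
  define K where "K = S \<inter> sphere 0 1"
  have unit: "y /\<^sub>R norm y \<in> K" if "y \<in> S" "y \<noteq> 0" for y
    using that S by (auto simp: K_def subspace_mul)
  have "compact K" unfolding K_def
    using closed_subspace[OF S] compact_sphere by (rule closed_Int_compact)
  moreover have "K \<noteq> {}" using unit[OF x] by auto
  moreover have "continuous_on K (\<lambda>y. y \<bullet> (Q *v y))"
    by (intro continuous_intros matrix_vector_mult_linear_continuous_on)
  ultimately obtain v where vK: "v \<in> K" and vmax: "\<And>y. y \<in> K \<Longrightarrow> y \<bullet> (Q *v y) \<le> v \<bullet> (Q *v v)"
    by (metis continuous_attains_sup)
  define \<mu> where "\<mu> = v \<bullet> (Q *v v)"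
  have vS: "v \<in> S" and v1: "norm v = 1" using vK by (auto simp: K_def)
  have rayleigh: "z \<bullet> (Q *v z) \<le> \<mu> * (norm z)\<^sup>2" if "z \<in> S" for z
  proof (cases "z = 0")
    case False
    have "(z /\<^sub>R norm z) \<bullet> (Q *v (z /\<^sub>R norm z)) \<le> \<mu>"
      unfolding \<mu>_def using False that by (intro vmax unit)
    hence "(z \<bullet> (Q *v z)) / (norm z)\<^sup>2 \<le> \<mu>"
      by (simp add: matrix_vector_mult_scaleR power2_eq_square divide_inverse mult.commute mult.left_commute)
    then show ?thesis using False by (simp add: divide_le_eq mult.commute)
  qed simp
  define r where "r = Q *v v - \<mu> *\<^sub>R v"
  have vv: "v \<bullet> v = 1" using v1 by (simp add: dot_square_norm)
  have rS: "r \<in> S" using vS inv S by (simp add: r_def subspace_diff subspace_mul)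
  have rv: "r \<bullet> v = 0" by (simp add: r_def inner_diff_left vv \<mu>_def inner_commute[of "Q *v v" v])
  have "r \<bullet> (Q *v v) = 0"
  proof (rule rayleigh_max_orthogonal[OF sym v1 rv])
    fix t
    have "v + t *\<^sub>R r \<in> S" using vS rS S by (simp add: subspace_add subspace_mul)
    then show "(v + t *\<^sub>R r) \<bullet> (Q *v (v + t *\<^sub>R r)) \<le> v \<bullet> (Q *v v) * (norm (v + t *\<^sub>R r))\<^sup>2"
      using rayleigh \<mu>_def by blast
  qed
  moreover have "r \<bullet> r = r \<bullet> (Q *v v) - \<mu> * (r \<bullet> v)"
    by (subst (2) r_def) (simp add: inner_diff_right)
  ultimately have "r \<bullet> r = 0" using rv by simp
  hence "Q *v v = (v \<bullet> (Q *v v)) *\<^sub>R v" by (simp add: r_def \<mu>_def)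
  with vS v1 show ?thesis by (rule that)
qed

definition orthonormal_eigenvectors :: "real^'n^'n \<Rightarrow> (real^'n) set \<Rightarrow> bool" where
  "orthonormal_eigenvectors Q B \<longleftrightarrow>
     pairwise orthogonal B \<and> (\<forall>b\<in>B. norm b = 1 \<and> Q *v b = (b \<bullet> (Q *v b)) *\<^sub>R b)"

lemma invariant_subspace_orthonormal_eigenvectors:
  fixes Q :: "real^'n^'n"
  assumes sym: "transpose Q = Q"
  shows "subspace S \<Longrightarrow> (\<And>x. x \<in> S \<Longrightarrow> Q *v x \<in> S) \<Longrightarrow>
    \<exists>B. B \<subseteq> S \<and> orthonormal_eigenvectors Q B \<and> S \<subseteq> span B"
proof (induction "dim S" arbitrary: S rule: less_induct)
  case less
  show ?case
  proof (cases "S \<subseteq> {0}")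
    case True
    then show ?thesis by (intro exI[of _ "{}"]) (auto simp: orthonormal_eigenvectors_def)
  next
    case False
    then obtain x where "x \<in> S" "x \<noteq> 0" by auto
    then obtain v where vS: "v \<in> S" and v1: "norm v = 1"
      and eig: "Q *v v = (v \<bullet> (Q *v v)) *\<^sub>R v"
      using invariant_subspace_unit_eigenvector[OF sym less.prems] by blast
    have vv: "v \<bullet> v = 1" using v1 by (simp add: dot_square_norm)
    define S' where "S' = S \<inter> {y. v \<bullet> y = 0}"
    have S': "subspace S'"
      unfolding S'_def using less.prems(1) subspace_hyperplane by (rule subspace_inter)
    have inv': "Q *v y \<in> S'" if "y \<in> S'" for y
    proof -
      have "v \<bullet> (Q *v y) = (Q *v v) \<bullet> y" using symmetric_matrix_inner[OF sym] by simp
      also have "\<dots> = (v \<bullet> (Q *v v)) * (v \<bullet> y)" by (subst eig) simp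
      finally have "v \<bullet> (Q *v y) = (v \<bullet> (Q *v v)) * (v \<bullet> y)" .
      with that less.prems(2) show ?thesis by (simp add: S'_def)
    qed
    have "v \<notin> S'" "S' \<subseteq> S" using vv by (auto simp: S'_def)
    hence "S' \<subset> S" using vS by blast
    moreover have spans: "span S' = S'" "span S = S"
      using S' less.prems(1) by (simp_all add: span_eq_iff)
    ultimately have "dim S' < dim S" using dim_psubset[of S' S] by (simp only: spans)
    from less.hyps[OF this S' inv'] obtain B' where
      B': "B' \<subseteq> S'" "orthonormal_eigenvectors Q B'" "S' \<subseteq> span B'" by blast
    have "S \<subseteq> span (insert v B')"
    proof
      fix y assume "y \<in> S"
      hence "y - (v \<bullet> y) *\<^sub>R v \<in> S'"
        using vS less.prems(1) vv by (simp add: S'_def subspace_diff subspace_mul inner_diff_right)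
      hence "y - (v \<bullet> y) *\<^sub>R v \<in> span (insert v B')" using B'(3) span_mono[of B'] by blast
      moreover have "(v \<bullet> y) *\<^sub>R v \<in> span (insert v B')" by (simp add: span_base span_mul)
      ultimately have "(y - (v \<bullet> y) *\<^sub>R v) + (v \<bullet> y) *\<^sub>R v \<in> span (insert v B')"
        by (rule span_add)
      thus "y \<in> span (insert v B')" by simp
    qed
    moreover have "orthonormal_eigenvectors Q (insert v B')"
      using B' v1 eig vv unfolding orthonormal_eigenvectors_def
      by (auto simp: pairwise_insert orthogonal_def S'_def inner_commute)
    moreover have "insert v B' \<subseteq> S" using B'(1) vS by (auto simp: S'_def)
    ultimately show ?thesis by blast
  qed
qed

definition orthonormal_eigenbasis :: "real^'n^'n \<Rightarrow> ('n \<Rightarrow> real^'n) \<Rightarrow> ('n \<Rightarrow> real) \<Rightarrow> bool" where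
  "orthonormal_eigenbasis Q b lam \<longleftrightarrow>
     (\<forall>i j. b i \<bullet> b j = (if i = j then 1 else 0)) \<and> (\<forall>i. Q *v b i = lam i *\<^sub>R b i)"

theorem symmetric_matrix_orthonormal_eigenbasis:
  fixes Q :: "real^'n^'n"
  assumes sym: "transpose Q = Q"
  obtains b lam where "orthonormal_eigenbasis Q b lam"
proof -
  obtain B where B: "orthonormal_eigenvectors Q B" "span B = UNIV"
    using invariant_subspace_orthonormal_eigenvectors[OF sym, of UNIV] by auto
  have "pairwise orthogonal B" "0 \<notin> B" using B(1) by (auto simp: orthonormal_eigenvectors_def)
  hence indep: "independent B" by (rule pairwise_orthogonal_independent)
  have "finite B" using indep by (rule finiteI_independent)
  moreover have "card B = CARD('n)"
    using dim_span_eq_card_independent[OF indep] B(2) by (simp add: dim_UNIV)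
  ultimately obtain b where bij: "bij_betw b (UNIV :: 'n set) B"
    using finite_same_card_bij[of "UNIV :: 'n set" B] by auto
  have "orthonormal_eigenbasis Q b (\<lambda>i. b i \<bullet> (Q *v b i))"
    unfolding orthonormal_eigenbasis_def
  proof (intro conjI allI)
    fix i j
    have "b i \<in> B" "b j \<in> B" using bij by (auto simp: bij_betw_def)
    moreover have "b i \<noteq> b j" if "i \<noteq> j" using bij that by (auto simp: bij_betw_def inj_on_def)
    ultimately show "b i \<bullet> b j = (if i = j then 1 else 0)" "Q *v b i = (b i \<bullet> (Q *v b i)) *\<^sub>R b i"
      using B(1) unfolding orthonormal_eigenvectors_def pairwise_def orthogonal_def
      by (auto simp: dot_square_norm)
  qed
  thus ?thesis using that by blast
qed

lemma orthonormal_eigenbasis_span: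
  assumes "orthonormal_eigenbasis Q b lam"
  shows "span (range b) = UNIV"
proof -
  have ortho: "b i \<bullet> b j = (if i = j then 1 else 0)" for i j
    using assms by (simp add: orthonormal_eigenbasis_def)
  have "pairwise orthogonal (range b)"
    by (auto simp: pairwise_def orthogonal_def ortho)
  moreover have "0 \<notin> range b" by (metis ortho imageE inner_zero_left zero_neq_one)
  ultimately have "independent (range b)" by (rule pairwise_orthogonal_independent)
  moreover have "inj b" by (rule injI) (metis ortho zero_neq_one)
  ultimately have "UNIV \<subseteq> span (range b)"
    by (intro card_ge_dim_independent) (simp_all add: card_image dim_UNIV)
  thus ?thesis by blast
qed

lemma orthonormal_eigenbasis_expansion:
  assumes eb: "orthonormal_eigenbasis Q b lam"
  shows "x = (\<Sum>i\<in>UNIV. (b i \<bullet> x) *\<^sub>R b i)"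
proof -
  define y where "y = x - (\<Sum>i\<in>UNIV. (b i \<bullet> x) *\<^sub>R b i)"
  have "b j \<bullet> y = 0" for j
    using eb by (simp add: y_def orthonormal_eigenbasis_def inner_diff_right inner_sum_right
        if_distrib[of "\<lambda>t. _ * t"] cong: if_cong)
  hence "\<forall>z\<in>range b. orthogonal z y" by (auto simp: orthogonal_def)
  hence "orthogonal y y"
    using orthogonal_to_span orthonormal_eigenbasis_span[OF eb] by (metis UNIV_I orthogonal_commute)
  thus ?thesis by (simp add: y_def orthogonal_def)
qed

lemma orthonormal_eigenbasis_parseval:
  assumes eb: "orthonormal_eigenbasis Q b lam"
  shows "(norm x)\<^sup>2 = (\<Sum>i\<in>UNIV. (b i \<bullet> x)\<^sup>2)"
proof -
  have "(norm x)\<^sup>2 = x \<bullet> (\<Sum>i\<in>UNIV. (b i \<bullet> x) *\<^sub>R b i)"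
    by (subst orthonormal_eigenbasis_expansion[OF eb, symmetric]) (simp add: power2_norm_eq_inner)
  thus ?thesis by (simp add: inner_sum_right power2_eq_square inner_commute)
qed

lemma orthonormal_eigenbasis_eigenvalues:
  fixes Q :: "real^'n^'n"
  assumes sym: "transpose Q = Q" and eb: "orthonormal_eigenbasis Q b lam"
  shows "is_eigenvalue Q \<mu> \<longleftrightarrow> \<mu> \<in> range lam"
proof
  assume "is_eigenvalue Q \<mu>"
  then obtain v where v: "v \<noteq> 0" "Q *v v = \<mu> *\<^sub>R v" by (auto simp: is_eigenvalue_def)
  have "(\<mu> - lam i) * (b i \<bullet> v) = 0" for i
  proof -
    have "\<mu> * (b i \<bullet> v) = (Q *v b i) \<bullet> v" using v(2) symmetric_matrix_inner[OF sym] by simp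
    thus ?thesis using eb by (simp add: orthonormal_eigenbasis_def algebra_simps)
  qed
  moreover obtain i where "b i \<bullet> v \<noteq> 0"
    using orthonormal_eigenbasis_expansion[OF eb, of v] v(1) by force
  ultimately show "\<mu> \<in> range lam" by auto
next
  assume "\<mu> \<in> range lam"
  then obtain i where "\<mu> = lam i" by blast
  moreover have "b i \<noteq> 0"
    using eb unfolding orthonormal_eigenbasis_def by (metis inner_zero_left zero_neq_one)
  ultimately show "is_eigenvalue Q \<mu>"
    using eb unfolding is_eigenvalue_def orthonormal_eigenbasis_def by blast
qed

section \<open>Stable second-order linear recurrences\<close>

fun lin_rec :: "real \<Rightarrow> real \<Rightarrow> real \<Rightarrow> real \<Rightarrow> nat \<Rightarrow> real" where
  "lin_rec a b u0 u1 0 = u0"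
| "lin_rec a b u0 u1 (Suc 0) = u1"
| "lin_rec a b u0 u1 (Suc (Suc k)) = - b * lin_rec a b u0 u1 (Suc k) - a * lin_rec a b u0 u1 k"

text \<open>Jury's conditions: both roots of \<open>z\<^sup>2 + b z + a\<close> lie in the open unit disc.\<close>
definition schur_stable :: "real \<Rightarrow> real \<Rightarrow> bool" where
  "schur_stable a b \<longleftrightarrow> 1 + a > 0 \<and> 1 - a > 0 \<and> 1 + a + b > 0 \<and> 1 + a - b > 0"

definition impulse_energy :: "real \<Rightarrow> real \<Rightarrow> real" where
  "impulse_energy a b = (1 + a) / ((1 - a) * (1 + a + b) * (1 + a - b))"

text \<open>The quadratic Lyapunov function of the companion matrix of \<open>z\<^sup>2 + b z + a\<close>; its
  coefficient of \<open>y\<^sup>2\<close> is \<open>impulse_energy a b\<close>.\<close>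
definition rec_lyapunov :: "real \<Rightarrow> real \<Rightarrow> real \<Rightarrow> real \<Rightarrow> real" where
  "rec_lyapunov a b x y =
     (let P = impulse_energy a b in (1 + a\<^sup>2 * P) * x\<^sup>2 + 2 * (a * b * P / (1 + a)) * x * y + P * y\<^sup>2)"

lemma rec_lyapunov_step:
  assumes "schur_stable a b"
  shows "rec_lyapunov a b y (- b * y - a * x) = rec_lyapunov a b x y - x\<^sup>2"
proof -
  define P where "P = impulse_energy a b"
  define R where "R = a * b * P / (1 + a)"
  have P: "P * ((1 - a) * (1 + a + b) * (1 + a - b)) = 1 + a"
    using assms by (simp add: P_def impulse_energy_def schur_stable_def)
  have R: "R * (1 + a) = a * b * P" using assms by (simp add: R_def schur_stable_def)
  have "(1 + a\<^sup>2 * P - 2 * R * b + P * b\<^sup>2 - P) * (1 + a)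
      = (1 + a) - P * ((1 - a) * (1 + a + b) * (1 + a - b)) + 2 * b * (a * b * P - R * (1 + a))"
    by (simp add: algebra_simps power2_eq_square)
  hence "1 + a\<^sup>2 * P - 2 * R * b + P * b\<^sup>2 - P = 0"
    using P R assms by (simp add: schur_stable_def)
  moreover have "rec_lyapunov a b y (- b * y - a * x) - (rec_lyapunov a b x y - x\<^sup>2)
      = (1 + a\<^sup>2 * P - 2 * R * b + P * b\<^sup>2 - P) * y\<^sup>2 + 2 * (a * b * P - R * (1 + a)) * x * y"
    unfolding rec_lyapunov_def Let_def P_def[symmetric] R_def[symmetric]
    by (simp add: algebra_simps power2_eq_square)
  ultimately show ?thesis using R by simp
qed

lemma rec_lyapunov_ge:
  assumes "schur_stable a b"
  shows "x\<^sup>2 \<le> rec_lyapunov a b x y"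
proof -
  define P where "P = impulse_energy a b"
  define t where "t = b / (1 + a)"
  have st: "1 + a > 0" "1 - a > 0" "1 + a + b > 0" "1 + a - b > 0"
    using assms by (auto simp: schur_stable_def)
  hence "P > 0" by (simp add: P_def impulse_energy_def)
  moreover have "\<bar>t\<bar> < 1" using st by (simp add: t_def abs_less_iff field_simps)
  hence "t\<^sup>2 < 1" by (simp add: abs_square_less_1)
  moreover have "rec_lyapunov a b x y = x\<^sup>2 + P * (y + a * t * x)\<^sup>2 + a\<^sup>2 * P * (1 - t\<^sup>2) * x\<^sup>2"
    unfolding rec_lyapunov_def Let_def P_def[symmetric]
    by (simp add: t_def algebra_simps power2_eq_square)
  ultimately show ?thesis by (simp add: add_nonneg_nonneg)
qed

lemma lin_rec_sq_sums:
  assumes st: "schur_stable a b"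
  shows "(\<lambda>k. (lin_rec a b u0 u1 k)\<^sup>2) sums rec_lyapunov a b u0 u1"
proof -
  let ?u = "lin_rec a b u0 u1"
  let ?V = "\<lambda>N. rec_lyapunov a b (lin_rec a b u0 u1 N) (lin_rec a b u0 u1 (Suc N))"
  have step: "?V (Suc N) = ?V N - (?u N)\<^sup>2" for N
    using rec_lyapunov_step[OF st, of "?u (Suc N)" "?u N"] by simp
  have partial: "(\<Sum>k<N. (?u k)\<^sup>2) = rec_lyapunov a b u0 u1 - ?V N" for N
    by (induction N) (simp_all add: step del: lin_rec.simps(3))
  have "(\<Sum>k<N. (?u k)\<^sup>2) \<le> rec_lyapunov a b u0 u1" for N
    using partial[of N] rec_lyapunov_ge[OF st, of "?u N" "?u (Suc N)"] zero_le_power2[of "?u N"]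
    by linarith
  hence "summable (\<lambda>k. (?u k)\<^sup>2)" by (intro summableI_nonneg_bounded) simp_all
  hence "(\<lambda>k. (?u k)\<^sup>2) \<longlonglongrightarrow> 0" by (rule summable_LIMSEQ_zero)
  hence "(\<lambda>k. sqrt ((?u k)\<^sup>2)) \<longlonglongrightarrow> sqrt 0" by (rule tendsto_real_sqrt)
  hence "?u \<longlonglongrightarrow> 0" by (simp add: tendsto_rabs_zero_iff)
  hence "?V \<longlonglongrightarrow> rec_lyapunov a b 0 0"
    unfolding rec_lyapunov_def Let_def by (intro tendsto_intros LIMSEQ_Suc)
  hence "(\<lambda>N. rec_lyapunov a b u0 u1 - ?V N) \<longlonglongrightarrow> rec_lyapunov a b u0 u1"
    by (auto intro!: tendsto_eq_intros simp: rec_lyapunov_def)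
  thus ?thesis unfolding sums_def partial .
qed

lemma lin_rec_sq_tendsto_zero:
  "schur_stable a b \<Longrightarrow> (\<lambda>k. (lin_rec a b u0 u1 k)\<^sup>2) \<longlonglongrightarrow> 0"
  using lin_rec_sq_sums summable_LIMSEQ_zero sums_summable by blast

lemma impulse_response_sq_sums:
  "schur_stable a b \<Longrightarrow> (\<lambda>k. (lin_rec a b 0 1 k)\<^sup>2) sums impulse_energy a b"
  using lin_rec_sq_sums[of a b 0 1] by (simp add: rec_lyapunov_def)

lemma impulse_energy_ge_one:
  assumes "schur_stable a b"
  shows "1 \<le> impulse_energy a b"
proof -
  have st: "1 + a > 0" "1 - a > 0" "1 + a + b > 0" "1 + a - b > 0"
    using assms by (auto simp: schur_stable_def)
  have "(1 - a) * (1 + a + b) * (1 + a - b) = (1 - a) * ((1 + a)\<^sup>2 - b\<^sup>2)"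
    by (simp add: algebra_simps power2_eq_square)
  also have "\<dots> \<le> (1 - a) * (1 + a)\<^sup>2" using st by (intro mult_left_mono) auto
  also have "\<dots> = (1 + a) * (1 - a\<^sup>2)" by (simp add: algebra_simps power2_eq_square)
  also have "\<dots> \<le> 1 + a" using st by (simp add: mult_left_le)
  finally show ?thesis using st by (simp add: impulse_energy_def)
qed

lemma lin_rec_forced:
  fixes y e :: "nat \<Rightarrow> real"
  assumes rec: "\<And>k. y (Suc (Suc k)) = - b * y (Suc k) - a * y k + e k"
  shows "y k = lin_rec a b (y 0) (y 1) k + (\<Sum>j<k. lin_rec a b 0 1 (k - Suc j) * e j)"
proof -
  define g where "g = lin_rec a b 0 1"
  define N where "N k = (\<Sum>j<k. g (k - Suc j) * e j)" for k
  have N_rec: "N (Suc (Suc k)) = - b * N (Suc k) - a * N k + e k" for k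
  proof -
    have "N (Suc (Suc k)) = (\<Sum>j<k. g (Suc k - j) * e j) + e k"
      by (simp add: N_def g_def)
    also have "(\<Sum>j<k. g (Suc k - j) * e j) = (\<Sum>j<k. (- b * g (k - j) - a * g (k - Suc j)) * e j)"
    proof (rule sum.cong)
      fix j assume "j \<in> {..<k}"
      hence "Suc k - j = Suc (Suc (k - Suc j))" "k - j = Suc (k - Suc j)" by auto
      thus "g (Suc k - j) * e j = (- b * g (k - j) - a * g (k - Suc j)) * e j" by (simp add: g_def)
    qed simp
    also have "\<dots> = - b * N (Suc k) - a * N k"
      by (simp add: N_def g_def sum_distrib_left sum_subtractf algebra_simps)
    finally show ?thesis .
  qed
  have "y k = lin_rec a b (y 0) (y 1) k + N k \<and> y (Suc k) = lin_rec a b (y 0) (y 1) (Suc k) + N (Suc k)"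
  proof (induction k)
    case 0
    show ?case by (simp add: N_def g_def)
  next
    case (Suc k)
    then show ?case by (simp add: rec N_rec algebra_simps)
  qed
  thus ?thesis by (simp add: N_def g_def)
qed

section \<open>White noise\<close>

definition scalar_white_noise :: "'a measure \<Rightarrow> (nat \<Rightarrow> 'a \<Rightarrow> real) \<Rightarrow> bool" where
  "scalar_white_noise M \<xi> \<longleftrightarrow>
     (\<forall>t. integrable M (\<xi> t) \<and> integral\<^sup>L M (\<xi> t) = 0)
   \<and> (\<forall>t s. integrable M (\<lambda>\<omega>. \<xi> t \<omega> * \<xi> s \<omega>)
         \<and> integral\<^sup>L M (\<lambda>\<omega>. \<xi> t \<omega> * \<xi> s \<omega>) = (if t = s then 1 else 0))"

lemma white_noise_projection:
  fixes w :: "nat \<Rightarrow> 'a \<Rightarrow> real^'n"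
  assumes wn: "white_noise M w" and b1: "norm b = 1"
  shows "scalar_white_noise M (\<lambda>t \<omega>. b \<bullet> w t \<omega>)"
proof -
  have W1: "integrable M (\<lambda>\<omega>. w t \<omega> $ i)" "integral\<^sup>L M (\<lambda>\<omega>. w t \<omega> $ i) = 0" for t i
    using wn by (auto simp: white_noise_def)
  have W2: "integrable M (\<lambda>\<omega>. w t \<omega> $ i * w s \<omega> $ j)"
    "integral\<^sup>L M (\<lambda>\<omega>. w t \<omega> $ i * w s \<omega> $ j) = (if t = s \<and> i = j then 1 else 0)" for t s i j
    using wn by (auto simp: white_noise_def)
  have lin: "(\<lambda>\<omega>. b \<bullet> w t \<omega>) = (\<lambda>\<omega>. \<Sum>i\<in>UNIV. b $ i * w t \<omega> $ i)" for t
    by (simp add: inner_vec_def)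
  have bilin: "(\<lambda>\<omega>. (b \<bullet> w t \<omega>) * (b \<bullet> w s \<omega>))
      = (\<lambda>\<omega>. \<Sum>i\<in>UNIV. \<Sum>j\<in>UNIV. b $ i * b $ j * (w t \<omega> $ i * w s \<omega> $ j))" for t s
    unfolding inner_vec_def sum_product by (simp add: mult_ac)
  have "(\<Sum>i\<in>UNIV. \<Sum>j\<in>UNIV. b $ i * b $ j * (if t = s \<and> i = j then 1 else 0))
      = (if t = s then b \<bullet> b else 0)" for t s :: nat
    by (simp add: inner_vec_def if_distrib[of "\<lambda>x. _ * x"] sum.delta cong: if_cong)
  moreover have "b \<bullet> b = 1" using b1 by (simp add: dot_square_norm)
  ultimately have "integrable M (\<lambda>\<omega>. (b \<bullet> w t \<omega>) * (b \<bullet> w s \<omega>))"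
    "integral\<^sup>L M (\<lambda>\<omega>. (b \<bullet> w t \<omega>) * (b \<bullet> w s \<omega>)) = (if t = s then 1 else 0)" for t s
    unfolding bilin using W2
    by (simp_all add: Bochner_Integration.integral_sum Bochner_Integration.integrable_sum)
  moreover have "integrable M (\<lambda>\<omega>. b \<bullet> w t \<omega>)" "integral\<^sup>L M (\<lambda>\<omega>. b \<bullet> w t \<omega>) = 0" for t
    unfolding lin using W1
    by (simp_all add: Bochner_Integration.integral_sum Bochner_Integration.integrable_sum)
  ultimately show ?thesis by (simp add: scalar_white_noise_def)
qed

lemma scalar_white_noise_filter_moments:
  assumes "scalar_white_noise M \<xi>"
  shows "integrable M (\<lambda>\<omega>. \<Sum>j<k. g j * \<xi> j \<omega>)"
    and "integral\<^sup>L M (\<lambda>\<omega>. \<Sum>j<k. g j * \<xi> j \<omega>) = 0"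
    and "integrable M (\<lambda>\<omega>. (\<Sum>j<k. g j * \<xi> j \<omega>)\<^sup>2)"
    and "integral\<^sup>L M (\<lambda>\<omega>. (\<Sum>j<k. g j * \<xi> j \<omega>)\<^sup>2) = (\<Sum>j<k. (g j)\<^sup>2)"
proof -
  have W1: "integrable M (\<xi> t)" "integral\<^sup>L M (\<xi> t) = 0" for t
    using assms by (auto simp: scalar_white_noise_def)
  have W2: "integrable M (\<lambda>\<omega>. \<xi> t \<omega> * \<xi> s \<omega>)"
    "integral\<^sup>L M (\<lambda>\<omega>. \<xi> t \<omega> * \<xi> s \<omega>) = (if t = s then 1 else 0)" for t s
    using assms by (auto simp: scalar_white_noise_def)
  have sq: "(\<lambda>\<omega>. (\<Sum>j<k. g j * \<xi> j \<omega>)\<^sup>2) = (\<lambda>\<omega>. \<Sum>i<k. \<Sum>j<k. g i * g j * (\<xi> i \<omega> * \<xi> j \<omega>))"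
    by (simp add: power2_eq_square sum_product algebra_simps)
  show "integrable M (\<lambda>\<omega>. \<Sum>j<k. g j * \<xi> j \<omega>)" "integral\<^sup>L M (\<lambda>\<omega>. \<Sum>j<k. g j * \<xi> j \<omega>) = 0"
    using W1 by (simp_all add: Bochner_Integration.integral_sum Bochner_Integration.integrable_sum)
  show "integrable M (\<lambda>\<omega>. (\<Sum>j<k. g j * \<xi> j \<omega>)\<^sup>2)"
    unfolding sq using W2 by (simp add: Bochner_Integration.integrable_sum)
  show "integral\<^sup>L M (\<lambda>\<omega>. (\<Sum>j<k. g j * \<xi> j \<omega>)\<^sup>2) = (\<Sum>j<k. (g j)\<^sup>2)"
    unfolding sq using W2
    by (simp add: Bochner_Integration.integral_sum Bochner_Integration.integrable_sum
        if_distrib[of "\<lambda>x. _ * x"] sum.delta power2_eq_square cong: if_cong)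
qed

lemma scalar_white_noise_affine_second_moment:
  assumes "prob_space M" and wn: "scalar_white_noise M \<xi>"
  shows "integrable M (\<lambda>\<omega>. (D + \<sigma> * (\<Sum>j<k. g j * \<xi> j \<omega>))\<^sup>2)"
    and "integral\<^sup>L M (\<lambda>\<omega>. (D + \<sigma> * (\<Sum>j<k. g j * \<xi> j \<omega>))\<^sup>2) = D\<^sup>2 + \<sigma>\<^sup>2 * (\<Sum>j<k. (g j)\<^sup>2)"
proof -
  interpret prob_space M by fact
  define S where "S \<omega> = (\<Sum>j<k. g j * \<xi> j \<omega>)" for \<omega>
  note moments = scalar_white_noise_filter_moments[OF wn, of g k, folded S_def]
  have expand: "(\<lambda>\<omega>. (D + \<sigma> * S \<omega>)\<^sup>2) = (\<lambda>\<omega>. D\<^sup>2 + (2 * D * \<sigma>) * S \<omega> + \<sigma>\<^sup>2 * (S \<omega>)\<^sup>2)"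
    by (simp add: power2_eq_square algebra_simps)
  show "integrable M (\<lambda>\<omega>. (D + \<sigma> * S \<omega>)\<^sup>2)"
    unfolding expand using moments by simp
  show "integral\<^sup>L M (\<lambda>\<omega>. (D + \<sigma> * S \<omega>)\<^sup>2) = D\<^sup>2 + \<sigma>\<^sup>2 * (\<Sum>j<k. (g j)\<^sup>2)"
    unfolding expand using moments by (simp add: prob_space)
qed

section \<open>Modal decomposition of the noisy momentum iteration\<close>

text \<open>The coefficients \<open>a(\<lambda>)\<close> and \<open>b(\<lambda>)\<close>: along an eigenvector of eigenvalue \<open>\<lambda>\<close> the iteration
  is driven by the characteristic polynomial \<open>z\<^sup>2 + b(\<lambda>) z + a(\<lambda>)\<close>.\<close>
definition mode_a :: "real \<Rightarrow> real \<Rightarrow> real \<Rightarrow> real \<Rightarrow> real" where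
  "mode_a \<alpha> \<beta> \<gamma> lam = \<beta> - \<gamma> * \<alpha> * lam"

definition mode_b :: "real \<Rightarrow> real \<Rightarrow> real \<Rightarrow> real \<Rightarrow> real" where
  "mode_b \<alpha> \<beta> \<gamma> lam = (1 + \<gamma>) * \<alpha> * lam - (1 + \<beta>)"

lemma Jhat_eq_impulse_energy:
  "Jhat \<alpha> \<beta> \<gamma> \<sigma> lam = \<sigma>\<^sup>2 * impulse_energy (mode_a \<alpha> \<beta> \<gamma> lam) (mode_b \<alpha> \<beta> \<gamma> lam)"
proof -
  define a where "a = mode_a \<alpha> \<beta> \<gamma> lam"
  define b where "b = mode_b \<alpha> \<beta> \<gamma> lam"
  define X where "X = (a + b + 1) * (1 - a) * (a - b + 1)"
  have "Jhat \<alpha> \<beta> \<gamma> \<sigma> lam = \<sigma>\<^sup>2 * ((a + b + 1) + (a - b + 1)) / (2 * X)"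
    unfolding Jhat_def Let_def a_def b_def mode_a_def mode_b_def X_def by (simp add: mult.assoc)
  also have "\<dots> = \<sigma>\<^sup>2 * ((1 + a) / X)" by (cases "X = 0") (simp_all add: field_simps)
  also have "(1 + a) / X = impulse_energy a b" unfolding impulse_energy_def X_def by (simp add: algebra_simps)
  finally show ?thesis by (simp add: a_def b_def)
qed

lemma mom_iter_mode_rec:
  fixes Q :: "real^'n^'n"
  assumes sym: "transpose Q = Q" and xs: "Q *v xs = q" and eig: "Q *v b = lam *\<^sub>R b"
  shows "b \<bullet> (mom_iter \<alpha> \<beta> \<gamma> \<sigma> Q q w x0 x1 (Suc (Suc k)) \<omega> - xs)
    = - mode_b \<alpha> \<beta> \<gamma> lam * (b \<bullet> (mom_iter \<alpha> \<beta> \<gamma> \<sigma> Q q w x0 x1 (Suc k) \<omega> - xs))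
      - mode_a \<alpha> \<beta> \<gamma> lam * (b \<bullet> (mom_iter \<alpha> \<beta> \<gamma> \<sigma> Q q w x0 x1 k \<omega> - xs)) + \<sigma> * (b \<bullet> w k \<omega>)"
proof -
  have bQ: "b \<bullet> (Q *v v) = lam * (b \<bullet> v)" for v
    using symmetric_matrix_inner[OF sym, of b v] eig by simp
  show ?thesis
    by (simp add: Let_def quad_grad_def xs[symmetric] inner_diff_right inner_add_right bQ
        mode_a_def mode_b_def algebra_simps)
qed

lemma mom_iter_mode_expansion:
  fixes Q :: "real^'n^'n" and \<alpha> \<beta> \<gamma> :: real
  assumes sym: "transpose Q = Q" and xs: "Q *v xs = q" and eig: "Q *v b = lam *\<^sub>R b"
  defines "a \<equiv> mode_a \<alpha> \<beta> \<gamma> lam" and "c \<equiv> mode_b \<alpha> \<beta> \<gamma> lam"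
  shows "b \<bullet> (mom_iter \<alpha> \<beta> \<gamma> \<sigma> Q q w x0 x1 k \<omega> - xs)
    = lin_rec a c (b \<bullet> (x0 - xs)) (b \<bullet> (x1 - xs)) k
      + \<sigma> * (\<Sum>j<k. lin_rec a c 0 1 (k - Suc j) * (b \<bullet> w j \<omega>))"
  using lin_rec_forced[where y = "\<lambda>k. b \<bullet> (mom_iter \<alpha> \<beta> \<gamma> \<sigma> Q q w x0 x1 k \<omega> - xs)"
      and e = "\<lambda>k. \<sigma> * (b \<bullet> w k \<omega>)", OF mom_iter_mode_rec[OF sym xs eig], folded a_def c_def]
  by (simp add: sum_distrib_left mult_ac)

lemma mom_iter_mode_second_moment:
  fixes Q :: "real^'n^'n" and w :: "nat \<Rightarrow> 'a \<Rightarrow> real^'n" and \<alpha> \<beta> \<gamma> :: real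
  assumes sym: "transpose Q = Q" and xs: "Q *v xs = q" and eig: "Q *v b = lam *\<^sub>R b"
    and b1: "norm b = 1" and wn: "white_noise M w"
  defines "a \<equiv> mode_a \<alpha> \<beta> \<gamma> lam" and "c \<equiv> mode_b \<alpha> \<beta> \<gamma> lam"
  shows "integrable M (\<lambda>\<omega>. (b \<bullet> (mom_iter \<alpha> \<beta> \<gamma> \<sigma> Q q w x0 x1 k \<omega> - xs))\<^sup>2)"
    and "integral\<^sup>L M (\<lambda>\<omega>. (b \<bullet> (mom_iter \<alpha> \<beta> \<gamma> \<sigma> Q q w x0 x1 k \<omega> - xs))\<^sup>2)
      = (lin_rec a c (b \<bullet> (x0 - xs)) (b \<bullet> (x1 - xs)) k)\<^sup>2 + \<sigma>\<^sup>2 * (\<Sum>t<k. (lin_rec a c 0 1 t)\<^sup>2)"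
proof -
  have "prob_space M" using wn by (simp add: white_noise_def)
  note moment = scalar_white_noise_affine_second_moment[OF this white_noise_projection[OF wn b1]]
  note expansion = mom_iter_mode_expansion[OF sym xs eig, of \<alpha> \<beta> \<gamma> \<sigma> w x0 x1 k, folded a_def c_def]
  show "integrable M (\<lambda>\<omega>. (b \<bullet> (mom_iter \<alpha> \<beta> \<gamma> \<sigma> Q q w x0 x1 k \<omega> - xs))\<^sup>2)"
    unfolding expansion by (rule moment(1))
  show "integral\<^sup>L M (\<lambda>\<omega>. (b \<bullet> (mom_iter \<alpha> \<beta> \<gamma> \<sigma> Q q w x0 x1 k \<omega> - xs))\<^sup>2)
      = (lin_rec a c (b \<bullet> (x0 - xs)) (b \<bullet> (x1 - xs)) k)\<^sup>2 + \<sigma>\<^sup>2 * (\<Sum>t<k. (lin_rec a c 0 1 t)\<^sup>2)"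
    unfolding expansion moment(2) using sum.nat_diff_reindex[of "\<lambda>t. (lin_rec a c 0 1 t)\<^sup>2" k] by simp
qed

lemma cesaro_mean_tendsto_zero:
  fixes a :: "nat \<Rightarrow> real"
  assumes "a \<longlonglongrightarrow> 0"
  shows "(\<lambda>t. (1 / real t) * (\<Sum>k\<le>t. a k)) \<longlonglongrightarrow> 0"
proof (rule LIMSEQ_I)
  fix r :: real assume r: "r > 0"
  obtain N where N: "\<And>k. k \<ge> N \<Longrightarrow> \<bar>a k\<bar> < r / 4"
    using LIMSEQ_D[OF assms, of "r / 4"] r by auto
  define C where "C = (\<Sum>k<N. \<bar>a k\<bar>)"
  obtain T :: nat where T: "real T > 2 * C / r + 1" using reals_Archimedean2 by blast
  have "\<bar>\<Sum>k\<le>t. a k\<bar> / real t < r" if t: "t \<ge> max N T" for t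
  proof -
    have tT: "real t > 2 * C / r + 1" using T t by linarith
    moreover have "2 * C / r \<ge> 0" using r by (simp add: C_def sum_nonneg)
    ultimately have t1: "real t > 1" by linarith
    have "2 * C + r < real t * r" using tT r by (simp add: field_simps)
    hence C: "2 * C < real t * r" using r by linarith
    have "\<bar>\<Sum>k\<le>t. a k\<bar> \<le> (\<Sum>k\<le>t. \<bar>a k\<bar>)" by (rule sum_abs)
    also have "\<dots> = C + (\<Sum>k\<in>{N..t}. \<bar>a k\<bar>)"
      using t by (simp add: C_def atLeast0AtMost[symmetric] sum.atLeastLessThan_concat[symmetric]
          atLeast0LessThan[symmetric] sum.last_plus flip: atLeastLessThanSuc_atLeastAtMost)
    also have "(\<Sum>k\<in>{N..t}. \<bar>a k\<bar>) \<le> (\<Sum>k\<in>{N..t}. r / 4)"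
      by (rule sum_mono) (use N in \<open>force simp: less_imp_le\<close>)
    also have "\<dots> \<le> (real t + 1) * (r / 4)" using r by (simp add: mult_right_mono)
    also have "C + (real t + 1) * (r / 4) < real t * r"
    proof -
      have "r < real t * r" using t1 r by simp
      thus ?thesis using C by (simp add: algebra_simps) argo
    qed
    finally show ?thesis using t1 by (simp add: divide_less_eq mult.commute)
  qed
  thus "\<exists>no. \<forall>t\<ge>no. norm ((1 / real t) * (\<Sum>k\<le>t. a k) - 0) < r"
    by (intro exI[of _ "max N T"]) (auto simp: abs_mult)
qed

lemma cesaro_mean_tendsto:
  fixes a :: "nat \<Rightarrow> real"
  assumes "a \<longlonglongrightarrow> l"
  shows "(\<lambda>t. (1 / real t) * (\<Sum>k\<le>t. a k)) \<longlonglongrightarrow> l"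
proof -
  have "(\<lambda>k. a k - l) \<longlonglongrightarrow> 0" using assms by (rule LIM_zero)
  hence "(\<lambda>t. (1 / real t) * (\<Sum>k\<le>t. a k - l)) \<longlonglongrightarrow> 0" by (rule cesaro_mean_tendsto_zero)
  moreover have "(\<lambda>t. l * ((real t + 1) / real t)) \<longlonglongrightarrow> l * 1"
    by (intro tendsto_intros) real_asymp
  ultimately have "(\<lambda>t. (1 / real t) * (\<Sum>k\<le>t. a k - l) + l * ((real t + 1) / real t)) \<longlonglongrightarrow> 0 + l * 1"
    by (rule tendsto_add)
  thus ?thesis by (simp add: sum_subtractf add_divide_distrib[symmetric] field_simps)
qed

lemma quad_xstar_solves:
  fixes Q :: "real^'n^'n"
  assumes sym: "transpose Q = Q" and pd: "\<forall>x. x \<noteq> 0 \<longrightarrow> x \<bullet> (Q *v x) > 0"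
  shows "Q *v quad_xstar Q q = q"
proof -
  have "inj ((*v) Q)"
  proof (rule injI)
    fix x y assume "Q *v x = Q *v y"
    hence "(x - y) \<bullet> (Q *v (x - y)) = 0" by (simp add: matrix_vector_mult_diff_distrib)
    thus "x = y" using pd[rule_format, of "x - y"] by (cases "x - y = 0") auto
  qed
  hence "surj ((*v) Q)" by (rule linear_inj_imp_surj[OF matrix_vector_mul_linear])
  then obtain z where z: "Q *v z = q" by (metis surjD)
  have excess: "quad_fun Q q y - quad_fun Q q z = (1/2) * ((y - z) \<bullet> (Q *v (y - z)))" for y
  proof -
    have "z \<bullet> (Q *v y) = y \<bullet> (Q *v z)"
      using symmetric_matrix_inner[OF sym, of z y] by (simp add: inner_commute)
    thus ?thesis unfolding quad_fun_def z[symmetric]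
      by (simp add: matrix_vector_mult_diff_distrib inner_diff_left inner_diff_right
          inner_commute[of z "Q *v z"] inner_commute[of y "Q *v z"] algebra_simps)
  qed
  have "\<forall>y. quad_fun Q q z \<le> quad_fun Q q y"
  proof
    fix y show "quad_fun Q q z \<le> quad_fun Q q y"
      using excess[of y] pd[rule_format, of "y - z"] by (cases "y = z") auto
  qed
  hence "\<forall>y. quad_fun Q q (quad_xstar Q q) \<le> quad_fun Q q y"
    unfolding quad_xstar_def by (rule someI)
  hence "quad_fun Q q (quad_xstar Q q) \<le> quad_fun Q q z" by blast
  hence "quad_xstar Q q = z"
    using excess[of "quad_xstar Q q"] pd[rule_format, of "quad_xstar Q q - z"]
    by (cases "quad_xstar Q q = z") auto
  thus ?thesis using z by simp
qed

theorem noise_avg_tendsto: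
  fixes Q :: "real^'n^'n" and w :: "nat \<Rightarrow> 'a \<Rightarrow> real^'n"
  assumes sym: "transpose Q = Q" and pd: "\<forall>x. x \<noteq> 0 \<longrightarrow> x \<bullet> (Q *v x) > 0"
    and wn: "white_noise M w" and eb: "orthonormal_eigenbasis Q b lam"
    and st: "\<And>i. schur_stable (mode_a \<alpha> \<beta> \<gamma> (lam i)) (mode_b \<alpha> \<beta> \<gamma> (lam i))"
  shows "noise_avg M \<alpha> \<beta> \<gamma> \<sigma> Q q w x0 x1 \<longlonglongrightarrow> (\<Sum>i\<in>UNIV. Jhat \<alpha> \<beta> \<gamma> \<sigma> (lam i))"
proof -
  define xs where "xs = quad_xstar Q q"
  define a where "a i = mode_a \<alpha> \<beta> \<gamma> (lam i)" for i
  define c where "c i = mode_b \<alpha> \<beta> \<gamma> (lam i)" for i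
  define E where "E k = integral\<^sup>L M (\<lambda>\<omega>. (norm (mom_iter \<alpha> \<beta> \<gamma> \<sigma> Q q w x0 x1 k \<omega> - xs))\<^sup>2)" for k
  have xs: "Q *v xs = q" unfolding xs_def by (rule quad_xstar_solves[OF sym pd])
  have b: "Q *v b i = lam i *\<^sub>R b i" "norm (b i) = 1" for i
    using eb by (auto simp: orthonormal_eigenbasis_def norm_eq_1)
  note moment = mom_iter_mode_second_moment[OF sym xs b wn]
  have "E = (\<lambda>k. \<Sum>i\<in>UNIV. (lin_rec (a i) (c i) (b i \<bullet> (x0 - xs)) (b i \<bullet> (x1 - xs)) k)\<^sup>2
                          + \<sigma>\<^sup>2 * (\<Sum>t<k. (lin_rec (a i) (c i) 0 1 t)\<^sup>2))" (is "_ = ?F")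
    by (rule ext, unfold E_def orthonormal_eigenbasis_parseval[OF eb])
      (simp add: Bochner_Integration.integral_sum moment a_def c_def)
  moreover have "?F \<longlonglongrightarrow> (\<Sum>i\<in>UNIV. 0 + \<sigma>\<^sup>2 * impulse_energy (a i) (c i))"
    using st lin_rec_sq_tendsto_zero impulse_response_sq_sums
    by (intro tendsto_intros) (auto simp: a_def c_def sums_def)
  ultimately have "E \<longlonglongrightarrow> (\<Sum>i\<in>UNIV. Jhat \<alpha> \<beta> \<gamma> \<sigma> (lam i))"
    by (simp add: Jhat_eq_impulse_energy a_def c_def)
  hence "(\<lambda>t. (1 / real t) * (\<Sum>k\<le>t. E k)) \<longlonglongrightarrow> (\<Sum>i\<in>UNIV. Jhat \<alpha> \<beta> \<gamma> \<sigma> (lam i))"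
    by (rule cesaro_mean_tendsto)
  thus ?thesis unfolding noise_avg_def E_def xs_def .
qed

section \<open>Extremal noise amplification over the class\<close>

lemma quad_class_spectrum:
  fixes Q :: "real^'n^'n"
  assumes "(Q, q) \<in> quad_class m L"
  obtains b lam i0 i1 where "orthonormal_eigenbasis Q b lam" "\<And>i. m \<le> lam i \<and> lam i \<le> L"
    "lam i0 = L" "lam i1 = m"
proof -
  have sym: "transpose Q = Q" using assms by (simp add: quad_class_def)
  obtain b lam where eb: "orthonormal_eigenbasis Q b lam"
    using symmetric_matrix_orthonormal_eigenbasis[OF sym] .
  note eig = orthonormal_eigenbasis_eigenvalues[OF sym eb]
  have "m \<le> lam i \<and> lam i \<le> L" for i using assms eig by (auto simp: quad_class_def)
  moreover obtain i0 i1 where "lam i0 = L" "lam i1 = m"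
    using assms eig by (auto simp: quad_class_def)
  ultimately show ?thesis using that eb by blast
qed

lemma quad_class_noise_avg_tendsto:
  fixes Q :: "real^'n^'n" and w :: "nat \<Rightarrow> 'a \<Rightarrow> real^'n"
  assumes cls: "(Q, q) \<in> quad_class m L" and wn: "white_noise M w"
    and stable: "\<And>lam. m \<le> lam \<Longrightarrow> lam \<le> L \<Longrightarrow> schur_stable (mode_a \<alpha> \<beta> \<gamma> lam) (mode_b \<alpha> \<beta> \<gamma> lam)"
  obtains lam :: "'n \<Rightarrow> real" and i0 i1 :: 'n
  where "\<And>i. m \<le> lam i \<and> lam i \<le> L" "lam i0 = L" "lam i1 = m"
    "noise_avg M \<alpha> \<beta> \<gamma> \<sigma> Q q w x0 x1 \<longlonglongrightarrow> (\<Sum>i\<in>UNIV. Jhat \<alpha> \<beta> \<gamma> \<sigma> (lam i))"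
proof -
  obtain b lam i0 i1 where eb: "orthonormal_eigenbasis Q b lam"
    and lam: "\<And>i. m \<le> lam i \<and> lam i \<le> L" and i0: "lam i0 = L" and i1: "lam i1 = m"
    using quad_class_spectrum[OF cls] by blast
  have "transpose Q = Q" "\<forall>x. x \<noteq> 0 \<longrightarrow> x \<bullet> (Q *v x) > 0"
    using cls by (simp_all add: quad_class_def)
  hence "noise_avg M \<alpha> \<beta> \<gamma> \<sigma> Q q w x0 x1 \<longlonglongrightarrow> (\<Sum>i\<in>UNIV. Jhat \<alpha> \<beta> \<gamma> \<sigma> (lam i))"
    by (rule noise_avg_tendsto[OF _ _ wn eb stable]) (use lam in auto)
  with lam i0 i1 show ?thesis by (rule that)
qed

definition diag_matrix :: "('n::finite \<Rightarrow> real) \<Rightarrow> real^'n^'n" where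
  "diag_matrix e = (\<chi> i j. if i = j then e i else 0)"

lemma diag_matrix_mult: "diag_matrix e *v x = (\<chi> i. e i * x $ i)"
  by (simp add: diag_matrix_def matrix_vector_mult_def vec_eq_iff if_distrib[of "\<lambda>t. t * _"] cong: if_cong)

lemma diag_matrix_symmetric: "transpose (diag_matrix e) = diag_matrix e"
  by (simp add: diag_matrix_def transpose_def vec_eq_iff)

lemma diag_matrix_pos_def:
  assumes pos: "\<And>i. e i > 0" and "x \<noteq> 0"
  shows "x \<bullet> (diag_matrix e *v x) > 0"
proof -
  obtain i where "x $ i \<noteq> 0" using assms(2) by (auto simp: vec_eq_iff)
  hence "0 < (\<Sum>j\<in>UNIV. e j * (x $ j)\<^sup>2)"
    using pos less_imp_le[OF pos] by (intro sum_pos2[of UNIV i]) simp_all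
  thus ?thesis by (simp add: diag_matrix_mult inner_vec_def power2_eq_square mult_ac)
qed

lemma diag_matrix_orthonormal_eigenbasis: "orthonormal_eigenbasis (diag_matrix e) (\<lambda>i. axis i 1) e"
proof -
  have "diag_matrix e *v axis i 1 = e i *\<^sub>R axis i 1" for i
    by (simp add: diag_matrix_mult vec_eq_iff axis_def)
  thus ?thesis by (simp add: orthonormal_eigenbasis_def inner_axis_axis)
qed

lemma diag_matrix_quad_class:
  fixes e :: "'n::finite \<Rightarrow> real"
  assumes "0 < m" and range: "\<And>i. m \<le> e i \<and> e i \<le> L" and "e i0 = L" "e i1 = m"
  shows "(diag_matrix e, q) \<in> quad_class m L"
proof -
  have "e i > 0" for i using assms(1) range[of i] by linarith
  hence "\<forall>x. x \<noteq> 0 \<longrightarrow> x \<bullet> (diag_matrix e *v x) > 0" using diag_matrix_pos_def by blast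
  moreover have "is_eigenvalue (diag_matrix e) \<mu> \<longleftrightarrow> \<mu> \<in> range e" for \<mu>
    by (rule orthonormal_eigenbasis_eigenvalues[OF diag_matrix_symmetric diag_matrix_orthonormal_eigenbasis])
  ultimately show ?thesis
    using diag_matrix_symmetric[of e] range assms(3,4) unfolding quad_class_def by auto
qed

lemma diag_matrix_noise_avg_tendsto:
  fixes e :: "'n::finite \<Rightarrow> real" and w :: "nat \<Rightarrow> 'a \<Rightarrow> real^'n"
  assumes pos: "\<And>i. e i > 0" and wn: "white_noise M w"
    and stable: "\<And>i. schur_stable (mode_a \<alpha> \<beta> \<gamma> (e i)) (mode_b \<alpha> \<beta> \<gamma> (e i))"
  shows "noise_avg M \<alpha> \<beta> \<gamma> \<sigma> (diag_matrix e) q w x0 x1 \<longlonglongrightarrow> (\<Sum>i\<in>UNIV. Jhat \<alpha> \<beta> \<gamma> \<sigma> (e i))"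
proof -
  have "\<forall>x. x \<noteq> 0 \<longrightarrow> x \<bullet> (diag_matrix e *v x) > 0" by (intro allI impI diag_matrix_pos_def[OF pos])
  with diag_matrix_symmetric show ?thesis
    using wn diag_matrix_orthonormal_eigenbasis stable by (rule noise_avg_tendsto)
qed

lemma sum_UNIV_two_points:
  fixes f :: "'n::finite \<Rightarrow> real"
  assumes "i0 \<noteq> i1"
  shows "(\<Sum>i\<in>UNIV. f i) = f i0 + f i1 + (\<Sum>i\<in>UNIV - {i0} - {i1}. f i)"
  using assms by (simp add: sum.remove[of UNIV i0] sum.remove[of "UNIV - {i0}" i1] add.assoc)

lemma card_UNIV_minus_two_points:
  assumes "(i0 :: 'n::finite) \<noteq> i1"
  shows "real (card (UNIV - {i0} - {i1})) = real CARD('n) - 2"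
proof -
  have "card {i0, i1} \<le> CARD('n)" by (rule card_mono) simp_all
  thus ?thesis using assms by (simp add: card_Diff_singleton of_nat_diff)
qed

lemma sum_two_points_le:
  fixes f :: "'n::finite \<Rightarrow> real"
  assumes "i0 \<noteq> i1" and "\<And>i. i \<noteq> i0 \<Longrightarrow> i \<noteq> i1 \<Longrightarrow> f i \<le> C"
  shows "(\<Sum>i\<in>UNIV. f i) \<le> f i0 + f i1 + (real CARD('n) - 2) * C"
  using sum_bounded_above[of "UNIV - {i0} - {i1}" f C] assms
    sum_UNIV_two_points[OF assms(1)] card_UNIV_minus_two_points[OF assms(1)]
  by simp

lemma sum_two_points_ge:
  fixes f :: "'n::finite \<Rightarrow> real"
  assumes "i0 \<noteq> i1" and "\<And>i. i \<noteq> i0 \<Longrightarrow> i \<noteq> i1 \<Longrightarrow> C \<le> f i"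
  shows "f i0 + f i1 + (real CARD('n) - 2) * C \<le> (\<Sum>i\<in>UNIV. f i)"
  using sum_bounded_below[of "UNIV - {i0} - {i1}" C f] assms
    sum_UNIV_two_points[OF assms(1)] card_UNIV_minus_two_points[OF assms(1)]
  by simp

lemma quad_class_noise_amp_bounds:
  fixes w :: "nat \<Rightarrow> 'a \<Rightarrow> real^'n"
  assumes mL: "m < L" and wn: "white_noise M w"
    and stable: "\<And>lam. m \<le> lam \<Longrightarrow> lam \<le> L \<Longrightarrow> schur_stable (mode_a \<alpha> \<beta> \<gamma> lam) (mode_b \<alpha> \<beta> \<gamma> lam)"
    and J_max: "\<And>lam. m \<le> lam \<Longrightarrow> lam \<le> L \<Longrightarrow> Jhat \<alpha> \<beta> \<gamma> \<sigma> lam \<le> Jhat \<alpha> \<beta> \<gamma> \<sigma> m"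
    and J_min: "\<And>lam. m \<le> lam \<Longrightarrow> lam \<le> L \<Longrightarrow> Jhat \<alpha> \<beta> \<gamma> \<sigma> \<mu> \<le> Jhat \<alpha> \<beta> \<gamma> \<sigma> lam"
  defines "J \<equiv> Jhat \<alpha> \<beta> \<gamma> \<sigma>"
  shows "\<forall>(Q, q) \<in> quad_class m L. convergent (noise_avg M \<alpha> \<beta> \<gamma> \<sigma> Q q w x0 x1)"
    and "\<forall>(Q, q) \<in> quad_class m L.
           noise_amp M \<alpha> \<beta> \<gamma> \<sigma> Q q w x0 x1 \<le> J m + J L + (real CARD('n) - 2) * J m"
    and "\<forall>(Q, q) \<in> quad_class m L.
           J m + J L + (real CARD('n) - 2) * J \<mu> \<le> noise_amp M \<alpha> \<beta> \<gamma> \<sigma> Q q w x0 x1"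
proof -
  have "convergent (noise_avg M \<alpha> \<beta> \<gamma> \<sigma> Q q w x0 x1)
      \<and> noise_amp M \<alpha> \<beta> \<gamma> \<sigma> Q q w x0 x1 \<le> J m + J L + (real CARD('n) - 2) * J m
      \<and> J m + J L + (real CARD('n) - 2) * J \<mu> \<le> noise_amp M \<alpha> \<beta> \<gamma> \<sigma> Q q w x0 x1"
    if cls: "(Q, q) \<in> quad_class m L" for Q q
  proof -
    obtain lam :: "'n \<Rightarrow> real" and i1 i0 where lam: "\<And>i. m \<le> lam i \<and> lam i \<le> L"
      and i: "lam i1 = L" "lam i0 = m"
      and lim: "noise_avg M \<alpha> \<beta> \<gamma> \<sigma> Q q w x0 x1 \<longlonglongrightarrow> (\<Sum>i\<in>UNIV. J (lam i))"
      using quad_class_noise_avg_tendsto[OF cls wn stable] unfolding J_def by blast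
    have i01: "i0 \<noteq> i1" using i mL by auto
    have "noise_amp M \<alpha> \<beta> \<gamma> \<sigma> Q q w x0 x1 = (\<Sum>i\<in>UNIV. J (lam i))"
      unfolding noise_amp_def using lim by (rule limI)
    moreover have "(\<Sum>i\<in>UNIV. J (lam i)) \<le> J (lam i0) + J (lam i1) + (real CARD('n) - 2) * J m"
      by (rule sum_two_points_le[OF i01]) (use J_max lam in \<open>auto simp: J_def\<close>)
    moreover have "J (lam i0) + J (lam i1) + (real CARD('n) - 2) * J \<mu> \<le> (\<Sum>i\<in>UNIV. J (lam i))"
      by (rule sum_two_points_ge[OF i01]) (use J_min lam in \<open>auto simp: J_def\<close>)
    moreover have "convergent (noise_avg M \<alpha> \<beta> \<gamma> \<sigma> Q q w x0 x1)"
      using lim by (rule convergentI)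
    ultimately show ?thesis unfolding i by simp
  qed
  thus "\<forall>(Q, q) \<in> quad_class m L. convergent (noise_avg M \<alpha> \<beta> \<gamma> \<sigma> Q q w x0 x1)"
    and "\<forall>(Q, q) \<in> quad_class m L.
           noise_amp M \<alpha> \<beta> \<gamma> \<sigma> Q q w x0 x1 \<le> J m + J L + (real CARD('n) - 2) * J m"
    and "\<forall>(Q, q) \<in> quad_class m L.
           J m + J L + (real CARD('n) - 2) * J \<mu> \<le> noise_amp M \<alpha> \<beta> \<gamma> \<sigma> Q q w x0 x1"
    by auto
qed

lemma diag_matrix_noise_amp_attains:
  fixes w :: "nat \<Rightarrow> 'a \<Rightarrow> real^'n" and \<alpha> \<beta> \<gamma> \<sigma> m L C :: real
  assumes i01: "(i0 :: 'n) \<noteq> i1" and mL: "0 < m" "m \<le> L" and C: "m \<le> C" "C \<le> L"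
    and wn: "white_noise M w"
    and stable: "\<And>lam. m \<le> lam \<Longrightarrow> lam \<le> L \<Longrightarrow> schur_stable (mode_a \<alpha> \<beta> \<gamma> lam) (mode_b \<alpha> \<beta> \<gamma> lam)"
  defines "J \<equiv> Jhat \<alpha> \<beta> \<gamma> \<sigma>"
  shows "\<exists>(Q, q) \<in> quad_class m L.
    noise_amp M \<alpha> \<beta> \<gamma> \<sigma> Q q w x0 x1 = J m + J L + (real CARD('n) - 2) * J C"
proof -
  define e where "e i = (if i = i0 then m else if i = i1 then L else C)" for i
  have e: "m \<le> e i \<and> e i \<le> L" for i using C mL by (simp add: e_def)
  hence "e i > 0" for i using mL(1) by (meson less_le_trans)
  hence "noise_avg M \<alpha> \<beta> \<gamma> \<sigma> (diag_matrix e) 0 w x0 x1 \<longlonglongrightarrow> (\<Sum>i\<in>UNIV. J (e i))"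
    unfolding J_def using e by (intro diag_matrix_noise_avg_tendsto wn stable) simp_all
  hence "noise_amp M \<alpha> \<beta> \<gamma> \<sigma> (diag_matrix e) 0 w x0 x1 = (\<Sum>i\<in>UNIV. J (e i))"
    unfolding noise_amp_def by (rule limI)
  also have "\<dots> = J m + J L + (real CARD('n) - 2) * J C"
    using sum_UNIV_two_points[OF i01, of "\<lambda>i. J (e i)"] card_UNIV_minus_two_points[OF i01] i01
    by (simp add: e_def)
  finally have "noise_amp M \<alpha> \<beta> \<gamma> \<sigma> (diag_matrix e) 0 w x0 x1 = J m + J L + (real CARD('n) - 2) * J C" .
  moreover have "(diag_matrix e, 0) \<in> quad_class m L"
    using mL(1) e by (rule diag_matrix_quad_class[of m e L i1 i0]) (use i01 in \<open>simp_all add: e_def\<close>)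
  ultimately show ?thesis by blast
qed

theorem noise_amp_extremes:
  fixes w :: "nat \<Rightarrow> 'a \<Rightarrow> real^'n"
  assumes n2: "CARD('n) \<ge> 2" and mL: "0 < m" "m < L" and wn: "white_noise M w"
    and stable: "\<And>lam. m \<le> lam \<Longrightarrow> lam \<le> L \<Longrightarrow> schur_stable (mode_a \<alpha> \<beta> \<gamma> lam) (mode_b \<alpha> \<beta> \<gamma> lam)"
    and J_max: "\<And>lam. m \<le> lam \<Longrightarrow> lam \<le> L \<Longrightarrow> Jhat \<alpha> \<beta> \<gamma> \<sigma> lam \<le> Jhat \<alpha> \<beta> \<gamma> \<sigma> m"
    and \<mu>: "m \<le> \<mu>" "\<mu> \<le> L"
    and J_min: "\<And>lam. m \<le> lam \<Longrightarrow> lam \<le> L \<Longrightarrow> Jhat \<alpha> \<beta> \<gamma> \<sigma> \<mu> \<le> Jhat \<alpha> \<beta> \<gamma> \<sigma> lam"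
  defines "J \<equiv> Jhat \<alpha> \<beta> \<gamma> \<sigma>"
  shows "(\<forall>(Q, q) \<in> quad_class m L. convergent (noise_avg M \<alpha> \<beta> \<gamma> \<sigma> Q q w x0 x1))
   \<and> (\<exists>(Q, q) \<in> quad_class m L. noise_amp M \<alpha> \<beta> \<gamma> \<sigma> Q q w x0 x1 = (real CARD('n) - 1) * J m + J L)
   \<and> (\<forall>(Q, q) \<in> quad_class m L. noise_amp M \<alpha> \<beta> \<gamma> \<sigma> Q q w x0 x1 \<le> (real CARD('n) - 1) * J m + J L)
   \<and> (\<exists>(Q, q) \<in> quad_class m L. noise_amp M \<alpha> \<beta> \<gamma> \<sigma> Q q w x0 x1 = J m + J L + (real CARD('n) - 2) * J \<mu>)
   \<and> (\<forall>(Q, q) \<in> quad_class m L. J m + J L + (real CARD('n) - 2) * J \<mu> \<le> noise_amp M \<alpha> \<beta> \<gamma> \<sigma> Q q w x0 x1)"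
proof -
  have max_eq: "(real CARD('n) - 1) * J m + J L = J m + J L + (real CARD('n) - 2) * J m"
    by (simp add: algebra_simps)
  obtain i0 i1 :: 'n where i01: "i0 \<noteq> i1"
    using n2 card_le_Suc0_iff_eq[of "UNIV :: 'n set"] by fastforce
  show ?thesis
    unfolding max_eq unfolding J_def
    by (intro conjI quad_class_noise_amp_bounds[OF mL(2) wn stable J_max J_min]
        diag_matrix_noise_amp_attains[OF i01 mL(1) _ _ _ wn stable]) (use mL \<mu> in auto)
qed

section \<open>The tuned parameters\<close>

text \<open>With \<open>\<beta> = \<gamma> = p / (1 - p)\<close> and \<open>u = \<alpha> \<lambda> - 1\<close> the coefficients of the mode are
  \<open>a = -\<beta> u\<close> and \<open>b = (1 + \<beta>) u\<close>; clearing the denominators \<open>1 - p\<close> of \<open>impulse_energy a b\<close>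
  leaves \<open>tuned_num p u / tuned_den p u\<close>.\<close>
definition tuned_num :: "real \<Rightarrow> real \<Rightarrow> real" where
  "tuned_num p u = (1 - p) * ((1 - p) - p * u)"

definition tuned_den :: "real \<Rightarrow> real \<Rightarrow> real" where
  "tuned_den p u = (1 + u) * ((1 - p) + p * u) * ((1 - p) - (1 + p) * u)"

lemma tuned_impulse_energy:
  assumes p: "p < 1" and \<beta>: "\<beta> = p / (1 - p)"
    and pos: "1 + u > 0" "(1 - p) + p * u > 0" "(1 - p) - (1 + p) * u > 0" "(1 - p) - p * u > 0"
  shows "schur_stable (- \<beta> * u) ((1 + \<beta>) * u)"
    and "impulse_energy (- \<beta> * u) ((1 + \<beta>) * u) = tuned_num p u / tuned_den p u"
proof -
  define k where "k = 1 - p"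
  have k: "k > 0" using p by (simp add: k_def)
  have \<beta>k: "\<beta> = p / k" using \<beta> by (simp add: k_def)
  have f1: "1 + (- \<beta> * u) = (k - p * u) / k" and f2: "1 - (- \<beta> * u) = (k + p * u) / k"
    using k by (simp_all add: \<beta>k field_simps)
  have f3: "1 + (- \<beta> * u) + (1 + \<beta>) * u = 1 + u" by (simp add: algebra_simps)
  have "1 + (- \<beta> * u) - (1 + \<beta>) * u = (k - (k + 2 * p) * u) / k"
    using k by (simp add: \<beta>k field_simps)
  hence f4: "1 + (- \<beta> * u) - (1 + \<beta>) * u = (k - (1 + p) * u) / k" by (simp add: k_def)
  have "1 + (- \<beta> * u) > 0" "1 - (- \<beta> * u) > 0"
    unfolding f1 f2 using pos k by (simp_all add: k_def)
  moreover have "1 + (- \<beta> * u) + (1 + \<beta>) * u > 0" unfolding f3 using pos by simp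
  moreover have "1 + (- \<beta> * u) - (1 + \<beta>) * u > 0" unfolding f4 using pos k by (simp add: k_def)
  ultimately show "schur_stable (- \<beta> * u) ((1 + \<beta>) * u)" by (simp add: schur_stable_def)
  have "impulse_energy (- \<beta> * u) ((1 + \<beta>) * u)
      = ((k - p * u) / k) / (((k + p * u) / k) * (1 + u) * ((k - (1 + p) * u) / k))"
    unfolding impulse_energy_def f3 f4 unfolding f1 f2 ..
  also have "\<dots> = (k * (k - p * u)) / ((1 + u) * (k + p * u) * (k - (1 + p) * u))"
  proof -
    have "(A / k) / ((B / k) * C * (D / k)) = (k * A) / (C * B * D)" for A B C D
    proof -
      have "(A / k) / ((B / k) * C * (D / k)) = (A / k) * ((k * k) / (B * C * D))" by (simp add: mult_ac)
      thus ?thesis using k by (simp add: mult_ac)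
    qed
    thus ?thesis .
  qed
  finally show "impulse_energy (- \<beta> * u) ((1 + \<beta>) * u) = tuned_num p u / tuned_den p u"
    by (simp add: tuned_num_def tuned_den_def k_def)
qed

lemma tuning_constants_pos:
  fixes c \<rho> :: real
  assumes "0 \<le> c" "c \<le> 1/2" "0 < \<rho>" "\<rho> < 1"
  shows "1 - c * \<rho> > 0" "1 - c - c * \<rho> > 0" "1 - c - c * \<rho>\<^sup>2 > 0" "1 - c + c * \<rho> > 0"
    "1 + c - c * \<rho> > 0" "1 + c + c * \<rho> > 0" "1 + c - c * \<rho>\<^sup>2 > 0" "1 + c + c * \<rho>\<^sup>2 > 0"
    "1 - c + c * \<rho>\<^sup>2 > 0" "0 \<le> c * \<rho>" "c * \<rho>\<^sup>2 \<le> c * \<rho>" "c * \<rho> \<le> c"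
proof -
  have "c * \<rho> \<le> c" "0 \<le> c * \<rho>" "c * \<rho> \<le> \<rho> / 2"
    using assms mult_left_mono[of \<rho> 1 c] mult_right_mono[of c "1/2" \<rho>] by simp_all
  moreover have "c * \<rho>\<^sup>2 \<le> c * \<rho>"
    using assms mult_left_mono[of \<rho> 1 "c * \<rho>"] by (simp add: power2_eq_square mult.assoc)
  moreover have "0 \<le> c * \<rho>\<^sup>2" using assms by simp
  ultimately show "1 - c * \<rho> > 0" "1 - c - c * \<rho> > 0" "1 - c - c * \<rho>\<^sup>2 > 0" "1 - c + c * \<rho> > 0"
    "1 + c - c * \<rho> > 0" "1 + c + c * \<rho> > 0" "1 + c - c * \<rho>\<^sup>2 > 0" "1 + c + c * \<rho>\<^sup>2 > 0"
    "1 - c + c * \<rho>\<^sup>2 > 0" "0 \<le> c * \<rho>" "c * \<rho>\<^sup>2 \<le> c * \<rho>" "c * \<rho> \<le> c"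
    using assms by linarith+
qed

text \<open>The endpoints \<open>v\<close> and \<open>w\<close> below are \<open>\<alpha> m - 1\<close> and \<open>\<alpha> L - 1\<close> for the tuned parameters.\<close>
lemma tuned_den_factors_pos:
  fixes c \<rho> v w u :: real
  assumes c: "0 \<le> c" "c \<le> 1/2" and \<rho>: "0 < \<rho>" "\<rho> < 1"
    and v: "v * (1 - c) = - \<rho> * (1 - c * \<rho>)" and w: "w * (1 + c) = \<rho> * (1 - c * \<rho>)"
    and u: "v \<le> u" "u \<le> w"
  shows "1 + u > 0" "(1 - c * \<rho>) + c * \<rho> * u > 0" "(1 - c * \<rho>) - (1 + c * \<rho>) * u > 0"
    "(1 - c * \<rho>) - c * \<rho> * u > 0"
proof -
  note pos = tuning_constants_pos[OF c \<rho>]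
  have "(1 + v) * (1 - c) = (1 - \<rho>) * (1 - c - c * \<rho>)" using v by algebra
  hence "1 + v > 0" using pos \<rho> c zero_less_mult_pos2[of "1 + v" "1 - c"] by simp
  thus "1 + u > 0" using u by simp
  have "((1 - c * \<rho>) + c * \<rho> * v) * (1 - c) = (1 - c * \<rho>) * (1 - c - c * \<rho>\<^sup>2)" using v by algebra
  hence "(1 - c * \<rho>) + c * \<rho> * v > 0"
    using pos c zero_less_mult_pos2[of "(1 - c * \<rho>) + c * \<rho> * v" "1 - c"] by simp
  moreover have "c * \<rho> * v \<le> c * \<rho> * u" using u pos by (intro mult_left_mono) auto
  ultimately show "(1 - c * \<rho>) + c * \<rho> * u > 0" by simp
  have "((1 - c * \<rho>) - (1 + c * \<rho>) * w) * (1 + c) = (1 - c * \<rho>) * (1 - \<rho>) * (1 + c + c * \<rho>)"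
    using w by algebra
  hence "(1 - c * \<rho>) - (1 + c * \<rho>) * w > 0"
    using pos \<rho> c zero_less_mult_pos2[of "(1 - c * \<rho>) - (1 + c * \<rho>) * w" "1 + c"] by simp
  moreover have "(1 + c * \<rho>) * u \<le> (1 + c * \<rho>) * w" using u pos by (intro mult_left_mono) auto
  ultimately show "(1 - c * \<rho>) - (1 + c * \<rho>) * u > 0" by simp
  have "((1 - c * \<rho>) - c * \<rho> * w) * (1 + c) = (1 - c * \<rho>) * (1 + c - c * \<rho>\<^sup>2)" using w by algebra
  hence "(1 - c * \<rho>) - c * \<rho> * w > 0"
    using pos c zero_less_mult_pos2[of "(1 - c * \<rho>) - c * \<rho> * w" "1 + c"] by simp
  moreover have "c * \<rho> * u \<le> c * \<rho> * w" using u pos by (intro mult_left_mono) auto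
  ultimately show "(1 - c * \<rho>) - c * \<rho> * u > 0" by simp
qed

lemma tuned_num_den_at_left:
  assumes "v * (1 - c) = - \<rho> * (1 - c * \<rho>)"
  shows "tuned_den (c * \<rho>) v * (1 - c) ^ 3
      = (1 - c * \<rho>)\<^sup>2 * (1 - \<rho>) * (1 + \<rho>) * (1 - c - c * \<rho>) * (1 - c - c * \<rho>\<^sup>2) * (1 - c + c * \<rho>)"
    and "tuned_num (c * \<rho>) v * (1 - c) = (1 - c * \<rho>)\<^sup>2 * (1 - c + c * \<rho>\<^sup>2)"
  using assms unfolding tuned_den_def tuned_num_def by algebra+

lemma tuned_num_den_at_right:
  assumes "w * (1 + c) = \<rho> * (1 - c * \<rho>)"
  shows "tuned_den (c * \<rho>) w * (1 + c) ^ 3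
      = (1 - c * \<rho>)\<^sup>2 * (1 + \<rho>) * (1 - \<rho>) * (1 + c - c * \<rho>) * (1 + c + c * \<rho>\<^sup>2) * (1 + c + c * \<rho>)"
    and "tuned_num (c * \<rho>) w * (1 + c) = (1 - c * \<rho>)\<^sup>2 * (1 + c - c * \<rho>\<^sup>2)"
  using assms unfolding tuned_den_def tuned_num_def by algebra+

lemma tuned_ratio_endpoints_le:
  fixes c \<rho> v w :: real
  assumes c: "0 \<le> c" "c \<le> 1/2" and \<rho>: "0 < \<rho>" "\<rho> < 1"
    and v: "v * (1 - c) = - \<rho> * (1 - c * \<rho>)" and w: "w * (1 + c) = \<rho> * (1 - c * \<rho>)"
  shows "tuned_den (c * \<rho>) v * tuned_num (c * \<rho>) w \<le> tuned_den (c * \<rho>) w * tuned_num (c * \<rho>) v"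
proof -
  note pos = tuning_constants_pos[OF c \<rho>]
  define AL where "AL = (1 + c - c * \<rho>) * (1 + c + c * \<rho>) * (1 - c)\<^sup>2"
  define Am where "Am = (1 - c - c * \<rho>) * (1 - c + c * \<rho>) * (1 + c)\<^sup>2"
  define BL where "BL = (1 + c + c * \<rho>\<^sup>2) * (1 - c + c * \<rho>\<^sup>2)"
  define Bm where "Bm = (1 - c - c * \<rho>\<^sup>2) * (1 + c - c * \<rho>\<^sup>2)"
  have "AL - Am = 4 * c ^ 3 * \<rho>\<^sup>2" "BL - Bm = 4 * c * \<rho>\<^sup>2"
    unfolding AL_def Am_def BL_def Bm_def by algebra+
  moreover have "Am \<ge> 0" "Bm \<ge> 0" using pos unfolding Am_def Bm_def by simp_all
  moreover have "0 \<le> 4 * c ^ 3 * \<rho>\<^sup>2" "0 \<le> 4 * c * \<rho>\<^sup>2" using c by simp_all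
  ultimately have "Am * Bm \<le> AL * BL" by (intro mult_mono) linarith+
  moreover have "0 < (1 - c * \<rho>) ^ 4 * (1 - \<rho>\<^sup>2) * (1 + c) * (1 - c)"
    using pos \<rho> c by (simp add: power_less_one_iff abs_square_less_1)
  moreover have "(tuned_den (c * \<rho>) w * tuned_num (c * \<rho>) v - tuned_den (c * \<rho>) v * tuned_num (c * \<rho>) w)
        * ((1 + c) ^ 4 * (1 - c) ^ 4)
      = (1 - c * \<rho>) ^ 4 * (1 - \<rho>\<^sup>2) * (1 + c) * (1 - c) * (AL * BL - Am * Bm)"
  proof -
    have "(tuned_den (c * \<rho>) w * tuned_num (c * \<rho>) v - tuned_den (c * \<rho>) v * tuned_num (c * \<rho>) w)
        * ((1 + c) ^ 4 * (1 - c) ^ 4)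
      = (tuned_den (c * \<rho>) w * (1 + c) ^ 3) * (tuned_num (c * \<rho>) v * (1 - c)) * ((1 + c) * (1 - c) ^ 3)
        - (tuned_den (c * \<rho>) v * (1 - c) ^ 3) * (tuned_num (c * \<rho>) w * (1 + c)) * ((1 - c) * (1 + c) ^ 3)"
      by algebra
    thus ?thesis
      unfolding tuned_num_den_at_left[OF v] tuned_num_den_at_right[OF w] AL_def Am_def BL_def Bm_def
      by algebra
  qed
  ultimately have "0 \<le> (tuned_den (c * \<rho>) w * tuned_num (c * \<rho>) v - tuned_den (c * \<rho>) v * tuned_num (c * \<rho>) w)
        * ((1 + c) ^ 4 * (1 - c) ^ 4)"
    by simp
  moreover have "(1 + c) ^ 4 * (1 - c) ^ 4 > 0" using c by simp
  ultimately show ?thesis by (simp add: zero_le_mult_iff)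
qed

text \<open>The cross difference of the two fractions at \<open>u\<close> and \<open>v\<close> is divisible by \<open>u - v\<close>; the quotient
  is a concave quadratic in \<open>u\<close>.\<close>
definition tuned_cross :: "real \<Rightarrow> real \<Rightarrow> real \<Rightarrow> real" where
  "tuned_cross p u v =
     ((- (1 - p) * p) + ((1 - p) * p - 1 - p) * (u + v) + (- p * (1 + p)) * (u * u + u * v + v * v))
       * tuned_num p v + (1 - p) * p * tuned_den p v"

lemma tuned_cross_factor:
  "tuned_den p u * tuned_num p v - tuned_den p v * tuned_num p u = (u - v) * tuned_cross p u v"
  unfolding tuned_den_def tuned_num_def tuned_cross_def by (simp add: algebra_simps)

lemma tuned_cross_interpolation:
  "(w - v) * tuned_cross p u v = (w - u) * tuned_cross p v v + (u - v) * tuned_cross p w v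
     + (w - v) * (p * (1 + p) * tuned_num p v) * (u - v) * (w - u)"
  unfolding tuned_den_def tuned_num_def tuned_cross_def by (simp add: algebra_simps)

lemma tuned_cross_diag_nonneg:
  fixes c \<rho> v :: real
  assumes c: "0 \<le> c" "c \<le> 1/2" and \<rho>: "0 < \<rho>" "\<rho> < 1"
    and v: "v * (1 - c) = - \<rho> * (1 - c * \<rho>)"
  shows "tuned_cross (c * \<rho>) v v \<ge> 0"
proof -
  define X where "X = c * \<rho>\<^sup>2"
  have X: "0 \<le> X" "X \<le> c" using tuning_constants_pos[OF c \<rho>] by (simp_all add: X_def)
  have "(1 - c)\<^sup>2 - X * (1 - c) * (1 - c + c\<^sup>2) - X\<^sup>2 * (1 - 2 * c + 2 * c\<^sup>2) + c * X ^ 3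
     = (1 - c) * (1 - 2 * c) + (c - X) * ((1 - 2 * c) * (1 + 2 * c\<^sup>2) + ((1 - c)\<^sup>2 + c\<^sup>2) * (X + c)
        + c * ((c\<^sup>2 - X\<^sup>2) + c * (c - X)))"
    by algebra
  also have "\<dots> \<ge> 0"
    using c X power_mono[OF X(2) X(1), of 2] by (intro add_nonneg_nonneg mult_nonneg_nonneg) auto
  finally have "0 \<le> 2 * \<rho> * (1 - c * \<rho>) ^ 3
      * ((1 - c)\<^sup>2 - X * (1 - c) * (1 - c + c\<^sup>2) - X\<^sup>2 * (1 - 2 * c + 2 * c\<^sup>2) + c * X ^ 3)"
    using \<rho> tuning_constants_pos[OF c \<rho>] by simp
  also have "\<dots> = tuned_cross (c * \<rho>) v v * (1 - c) ^ 3"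
    using v unfolding X_def tuned_cross_def tuned_num_def tuned_den_def by algebra
  finally show ?thesis using c by (simp add: zero_le_mult_iff)
qed

lemma tuned_ratio_le_left:
  fixes c \<rho> v w u :: real
  assumes c: "0 \<le> c" "c \<le> 1/2" and \<rho>: "0 < \<rho>" "\<rho> < 1"
    and v: "v * (1 - c) = - \<rho> * (1 - c * \<rho>)" and w: "w * (1 + c) = \<rho> * (1 - c * \<rho>)"
    and u: "v \<le> u" "u \<le> w"
  shows "tuned_num (c * \<rho>) u / tuned_den (c * \<rho>) u \<le> tuned_num (c * \<rho>) v / tuned_den (c * \<rho>) v"
proof -
  define p where "p = c * \<rho>"
  have vw: "v < w"
  proof -
    have "v * (1 - c) < 0" "w * (1 + c) > 0" using v w \<rho> tuning_constants_pos[OF c \<rho>] by simp_all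
    hence "v < 0" "0 < w" using c by (simp_all add: mult_less_0_iff zero_less_mult_iff)
    thus ?thesis by simp
  qed
  note pos_u = tuned_den_factors_pos[OF c \<rho> v w u, folded p_def]
  note pos_v = tuned_den_factors_pos[OF c \<rho> v w order_refl less_imp_le[OF vw], folded p_def]
  have "0 \<le> (w - v) * tuned_cross p w v"
    using tuned_ratio_endpoints_le[OF c \<rho> v w] tuned_cross_factor[of p w v] unfolding p_def by linarith
  hence "tuned_cross p w v \<ge> 0" using vw by (simp add: zero_le_mult_iff)
  moreover have "tuned_cross p v v \<ge> 0" using tuned_cross_diag_nonneg[OF c \<rho> v] by (simp add: p_def)
  moreover have "0 \<le> p" "p < 1" using tuning_constants_pos[OF c \<rho>] c unfolding p_def by linarith+
  moreover from this have "0 \<le> tuned_num p v" using pos_v(4) unfolding tuned_num_def by simp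
  ultimately have "0 \<le> (w - v) * tuned_cross p u v"
    unfolding tuned_cross_interpolation[of w v p u] using u by (intro add_nonneg_nonneg mult_nonneg_nonneg) simp_all
  hence "0 \<le> (u - v) * tuned_cross p u v" using vw u by (simp add: zero_le_mult_iff)
  hence "tuned_den p v * tuned_num p u \<le> tuned_den p u * tuned_num p v"
    using tuned_cross_factor[of p u v] by linarith
  moreover have "tuned_den p u > 0" "tuned_den p v > 0"
    using pos_u pos_v unfolding tuned_den_def by simp_all
  ultimately show ?thesis unfolding p_def[symmetric] by (simp add: divide_simps mult.commute)
qed

lemma tuned_parameters:
  fixes m L \<kappa> \<rho> c \<alpha> \<beta> :: real
  assumes mL: "0 < m" "m \<le> L" and kappa: "\<kappa> = L / m"
    and \<rho>: "0 < \<rho>" "\<rho> < 1" and c: "0 \<le> c" "c \<le> 1/2"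
    and c_eq: "\<kappa> * (1 - \<rho>) * (1 - c * \<rho> - c\<^sup>2 * (1 + \<rho>)) = (1 + \<rho>) * (1 - c * \<rho> - c\<^sup>2 * (1 - \<rho>))"
    and alpha: "\<alpha> = (1 + \<rho>) * (1 + c - c * \<rho>) / (L * (1 + c))"
    and beta: "\<beta> = c * \<rho>\<^sup>2 / ((\<alpha> * L - 1) * (1 + c))"
  shows "0 < \<alpha>" "\<beta> = c * \<rho> / (1 - c * \<rho>)"
    and "(\<alpha> * m - 1) * (1 - c) = - \<rho> * (1 - c * \<rho>)" "(\<alpha> * L - 1) * (1 + c) = \<rho> * (1 - c * \<rho>)"
    and "m < 1 / \<alpha>" "1 / \<alpha> < L"
proof -
  note pos = tuning_constants_pos[OF c \<rho>]
  have L: "L > 0" using mL by simp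
  have \<alpha>L: "\<alpha> * L * (1 + c) = (1 + \<rho>) * (1 + c - c * \<rho>)" using L c by (simp add: alpha)
  show \<alpha>: "0 < \<alpha>" unfolding alpha using \<rho> pos L c by simp
  show w: "(\<alpha> * L - 1) * (1 + c) = \<rho> * (1 - c * \<rho>)" using \<alpha>L by algebra
  show "\<beta> = c * \<rho> / (1 - c * \<rho>)" using \<rho> by (simp add: beta w power2_eq_square)
  have "\<kappa> * (1 - \<rho>) * (1 + c) * (1 - c - c * \<rho>) = (1 + \<rho>) * (1 - c) * (1 + c - c * \<rho>)"
    using c_eq by algebra
  hence "(\<alpha> * m * (1 - c)) * (\<kappa> * (1 + c)) = ((1 - \<rho>) * (1 - c - c * \<rho>)) * (\<kappa> * (1 + c))"
    using \<alpha>L mL(1) by (simp add: kappa) algebra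
  moreover have "\<kappa> * (1 + c) \<noteq> 0" using mL c by (simp add: kappa)
  ultimately have "\<alpha> * m * (1 - c) = (1 - \<rho>) * (1 - c - c * \<rho>)" by simp
  thus v: "(\<alpha> * m - 1) * (1 - c) = - \<rho> * (1 - c * \<rho>)" by algebra
  have "(\<alpha> * m - 1) * (1 - c) < 0" "0 < (\<alpha> * L - 1) * (1 + c)" unfolding v w using \<rho> pos by simp_all
  hence "\<alpha> * m < 1" "1 < \<alpha> * L" using c by (simp_all add: mult_less_0_iff zero_less_mult_iff)
  thus "m < 1 / \<alpha>" "1 / \<alpha> < L" using \<alpha> by (simp_all add: field_simps)
qed

lemma tuned_mode_Jhat:
  fixes c \<rho> \<alpha> \<beta> \<sigma> m L lam :: real
  assumes c: "0 \<le> c" "c \<le> 1/2" and \<rho>: "0 < \<rho>" "\<rho> < 1" and \<beta>: "\<beta> = c * \<rho> / (1 - c * \<rho>)"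
    and \<alpha>: "0 < \<alpha>" and v: "(\<alpha> * m - 1) * (1 - c) = - \<rho> * (1 - c * \<rho>)"
    and w: "(\<alpha> * L - 1) * (1 + c) = \<rho> * (1 - c * \<rho>)"
    and lam: "m \<le> lam" "lam \<le> L"
  shows "schur_stable (mode_a \<alpha> \<beta> \<beta> lam) (mode_b \<alpha> \<beta> \<beta> lam)"
    and "Jhat \<alpha> \<beta> \<beta> \<sigma> lam = \<sigma>\<^sup>2 * (tuned_num (c * \<rho>) (\<alpha> * lam - 1) / tuned_den (c * \<rho>) (\<alpha> * lam - 1))"
proof -
  define u where "u = \<alpha> * lam - 1"
  have "\<alpha> * m - 1 \<le> u" "u \<le> \<alpha> * L - 1" using lam \<alpha> by (simp_all add: u_def)
  note pos = tuned_den_factors_pos[OF c \<rho> v w this]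
  have "c * \<rho> < 1" using tuning_constants_pos[OF c \<rho>] by simp
  note tuned = tuned_impulse_energy[OF this \<beta> pos]
  have "mode_a \<alpha> \<beta> \<beta> lam = - \<beta> * u" "mode_b \<alpha> \<beta> \<beta> lam = (1 + \<beta>) * u"
    by (simp_all add: mode_a_def mode_b_def u_def algebra_simps)
  thus "schur_stable (mode_a \<alpha> \<beta> \<beta> lam) (mode_b \<alpha> \<beta> \<beta> lam)"
    and "Jhat \<alpha> \<beta> \<beta> \<sigma> lam = \<sigma>\<^sup>2 * (tuned_num (c * \<rho>) (\<alpha> * lam - 1) / tuned_den (c * \<rho>) (\<alpha> * lam - 1))"
    using tuned by (simp_all add: Jhat_eq_impulse_energy u_def)
qed

lemma tuned_Jhat_bounds:
  fixes c \<rho> \<alpha> \<beta> \<sigma> m L lam :: real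
  assumes c: "0 \<le> c" "c \<le> 1/2" and \<rho>: "0 < \<rho>" "\<rho> < 1" and \<beta>: "\<beta> = c * \<rho> / (1 - c * \<rho>)"
    and \<alpha>: "0 < \<alpha>" and v: "(\<alpha> * m - 1) * (1 - c) = - \<rho> * (1 - c * \<rho>)"
    and w: "(\<alpha> * L - 1) * (1 + c) = \<rho> * (1 - c * \<rho>)"
    and lam: "m \<le> lam" "lam \<le> L"
  shows "Jhat \<alpha> \<beta> \<beta> \<sigma> lam \<le> Jhat \<alpha> \<beta> \<beta> \<sigma> m" and "\<sigma>\<^sup>2 \<le> Jhat \<alpha> \<beta> \<beta> \<sigma> lam"
proof -
  note mode = tuned_mode_Jhat[OF c \<rho> \<beta> \<alpha> v w]
  have "m \<le> L" using lam by simp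
  show "Jhat \<alpha> \<beta> \<beta> \<sigma> lam \<le> Jhat \<alpha> \<beta> \<beta> \<sigma> m"
    unfolding mode(2)[OF lam] mode(2)[OF order_refl \<open>m \<le> L\<close>] using lam \<alpha>
    by (intro mult_left_mono tuned_ratio_le_left[OF c \<rho> v w]) (simp_all add: mult_left_mono)
  show "\<sigma>\<^sup>2 \<le> Jhat \<alpha> \<beta> \<beta> \<sigma> lam"
    unfolding Jhat_eq_impulse_energy
    using mult_left_mono[OF impulse_energy_ge_one[OF mode(1)[OF lam]], of "\<sigma>\<^sup>2"] by simp
qed

lemma tuned_condition_number:
  fixes c \<rho> \<kappa> r :: real
  assumes c: "0 \<le> c" "c \<le> 1/2" and \<rho>: "0 < \<rho>" "\<rho> < 1"
    and c_eq: "\<kappa> * (1 - \<rho>) * (1 - c * \<rho> - c\<^sup>2 * (1 + \<rho>)) = (1 + \<rho>) * (1 - c * \<rho> - c\<^sup>2 * (1 - \<rho>))"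
    and r: "r = (1 + c) * (1 - c + c * \<rho>) / ((1 - c) * (1 + c - c * \<rho>))"
  shows "r * \<kappa> + 1 = 2 * (1 - c + c * \<rho>\<^sup>2) / ((1 - \<rho>) * (1 - c - c * \<rho>))"
proof -
  define A B C E F G H where "A = 1 + c" and "B = 1 - c + c * \<rho>" and "C = 1 - c"
    and "E = 1 + c - c * \<rho>" and "F = 1 + \<rho>" and "G = 1 - \<rho>" and "H = 1 - c - c * \<rho>"
  have nz: "A \<noteq> 0" "C \<noteq> 0" "E \<noteq> 0" "G \<noteq> 0" "H \<noteq> 0"
    using tuning_constants_pos[OF c \<rho>] c \<rho> by (auto simp: A_def C_def E_def G_def H_def)
  have "\<kappa> * (G * A * H) = F * C * E"
    using c_eq unfolding A_def C_def E_def F_def G_def H_def by algebra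
  hence \<kappa>: "\<kappa> = F * C * E / (G * A * H)" using nz by (simp add: eq_divide_eq)
  have "r = A * B / (C * E)" unfolding r A_def B_def C_def E_def ..
  hence "r * \<kappa> = B * F / (G * H)" unfolding \<kappa> using nz by (simp add: field_simps)
  moreover have "B * F + G * H = 2 * (1 - c + c * \<rho>\<^sup>2)" unfolding B_def F_def G_def H_def by algebra
  ultimately show ?thesis using nz unfolding G_def[symmetric] H_def[symmetric] by (simp add: field_simps)
qed

lemma tuned_ratio_left_closed_form:
  fixes c \<rho> v \<kappa> r :: real
  assumes c: "0 \<le> c" "c \<le> 1/2" and \<rho>: "0 < \<rho>" "\<rho> < 1"
    and v: "v * (1 - c) = - \<rho> * (1 - c * \<rho>)"
    and c_eq: "\<kappa> * (1 - \<rho>) * (1 - c * \<rho> - c\<^sup>2 * (1 + \<rho>)) = (1 + \<rho>) * (1 - c * \<rho> - c\<^sup>2 * (1 - \<rho>))"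
    and r: "r = (1 + c) * (1 - c + c * \<rho>) / ((1 - c) * (1 + c - c * \<rho>))"
  shows "tuned_num (c * \<rho>) v / tuned_den (c * \<rho>) v
    = (1 - c)\<^sup>2 * (r * \<kappa> + 1) / (2 * (1 - c - c * \<rho>\<^sup>2) * (1 + \<rho>) * (1 - c + c * \<rho>))"
proof -
  have C: "1 - c \<noteq> 0" and K: "(1 - c * \<rho>)\<^sup>2 \<noteq> 0" using c tuning_constants_pos[OF c \<rho>] by auto
  have regroup: "a * x / (g * f * h * t * b) = a * (2 * x / (g * h)) / (2 * t * f * b)"
    for a x g f h t b :: real
    by (simp add: mult_ac)
  have "tuned_num (c * \<rho>) v / tuned_den (c * \<rho>) v
      = (tuned_num (c * \<rho>) v * (1 - c)) * (1 - c)\<^sup>2 / (tuned_den (c * \<rho>) v * (1 - c) ^ 3)"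
    using C by (simp add: power2_eq_square power3_eq_cube mult.assoc)
  also have "\<dots> = (1 - c * \<rho>)\<^sup>2 * ((1 - c)\<^sup>2 * (1 - c + c * \<rho>\<^sup>2))
      / ((1 - c * \<rho>)\<^sup>2 * ((1 - \<rho>) * (1 + \<rho>) * (1 - c - c * \<rho>) * (1 - c - c * \<rho>\<^sup>2) * (1 - c + c * \<rho>)))"
    unfolding tuned_num_den_at_left[OF v] by (simp add: mult_ac)
  also have "\<dots> = (1 - c)\<^sup>2 * (1 - c + c * \<rho>\<^sup>2)
      / ((1 - \<rho>) * (1 + \<rho>) * (1 - c - c * \<rho>) * (1 - c - c * \<rho>\<^sup>2) * (1 - c + c * \<rho>))"
    using K by simp
  also have "\<dots> = (1 - c)\<^sup>2 * (2 * (1 - c + c * \<rho>\<^sup>2) / ((1 - \<rho>) * (1 - c - c * \<rho>)))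
      / (2 * (1 - c - c * \<rho>\<^sup>2) * (1 + \<rho>) * (1 - c + c * \<rho>))"
    by (rule regroup)
  finally show ?thesis unfolding tuned_condition_number[OF c \<rho> c_eq r] .
qed

lemma tuned_ratio_right_closed_form:
  fixes c \<rho> w :: real
  assumes c: "0 \<le> c" "c \<le> 1/2" and \<rho>: "0 < \<rho>" "\<rho> < 1"
    and w: "w * (1 + c) = \<rho> * (1 - c * \<rho>)"
  shows "tuned_num (c * \<rho>) w / tuned_den (c * \<rho>) w
    = (1 + c)\<^sup>2 * (1 + c - c * \<rho>\<^sup>2)
      / ((1 - \<rho>\<^sup>2) * (1 + c - c * \<rho>) * (1 + c + c * \<rho>) * (1 + c + c * \<rho>\<^sup>2))"
proof -
  have C: "1 + c \<noteq> 0" and K: "(1 - c * \<rho>)\<^sup>2 \<noteq> 0" using c tuning_constants_pos[OF c \<rho>] by auto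
  have "tuned_num (c * \<rho>) w / tuned_den (c * \<rho>) w
      = (tuned_num (c * \<rho>) w * (1 + c)) * (1 + c)\<^sup>2 / (tuned_den (c * \<rho>) w * (1 + c) ^ 3)"
    using C by (simp add: power2_eq_square power3_eq_cube mult.assoc)
  also have "\<dots> = (1 - c * \<rho>)\<^sup>2 * ((1 + c)\<^sup>2 * (1 + c - c * \<rho>\<^sup>2))
      / ((1 - c * \<rho>)\<^sup>2 * (((1 + \<rho>) * (1 - \<rho>)) * (1 + c - c * \<rho>) * (1 + c + c * \<rho>) * (1 + c + c * \<rho>\<^sup>2)))"
    unfolding tuned_num_den_at_right[OF w] by (simp add: mult_ac)
  also have "(1 + \<rho>) * (1 - \<rho>) = 1 - \<rho>\<^sup>2" by (simp add: power2_eq_square algebra_simps)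
  finally show ?thesis using K by simp
qed

theorem corollary3:
  fixes m L \<kappa> \<rho> c \<alpha> \<beta> \<gamma> \<sigma> r :: real
    and M :: "'a measure" and w :: "nat \<Rightarrow> 'a \<Rightarrow> real^'n" and x0 x1 :: "real^'n"
  assumes n2: "CARD('n) \<ge> 2"
    and mL: "0 < m" "m \<le> L"
    and kappa: "\<kappa> = L / m"
    and rho: "0 < \<rho>" "\<rho> < 1"
    and rho_range: "sqrt (3 * \<kappa> + 1) / 2 \<le> 1 / (1 - \<rho>)" "1 / (1 - \<rho>) \<le> (\<kappa> + 1) / 2"
    and c_range: "0 \<le> c" "c \<le> 1/2"
    and c_eq: "\<kappa> * (1 - \<rho>) * (1 - c * \<rho> - c\<^sup>2 * (1 + \<rho>))
               = (1 + \<rho>) * (1 - c * \<rho> - c\<^sup>2 * (1 - \<rho>))"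
    and alpha: "\<alpha> = (1 + \<rho>) * (1 + c - c * \<rho>) / (L * (1 + c))"
    and beta: "\<beta> = c * \<rho>\<^sup>2 / ((\<alpha> * L - 1) * (1 + c))"
    and gamma: "\<gamma> = \<beta>"
    and sigma: "\<sigma> \<ge> 0"
    and noise: "white_noise M w"
    and r_def: "r = (1 + c) * (1 - c + c * \<rho>) / ((1 - c) * (1 + c - c * \<rho>))"
  shows
    "(\<forall>(Q, q) \<in> quad_class m L. convergent (noise_avg M \<alpha> \<beta> \<gamma> \<sigma> Q q w x0 x1))
   \<and> (\<exists>(Q, q) \<in> quad_class m L. noise_amp M \<alpha> \<beta> \<gamma> \<sigma> Q q w x0 x1
         = (real CARD('n) - 1) * Jhat \<alpha> \<beta> \<gamma> \<sigma> m + Jhat \<alpha> \<beta> \<gamma> \<sigma> L)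
   \<and> (\<forall>(Q, q) \<in> quad_class m L. noise_amp M \<alpha> \<beta> \<gamma> \<sigma> Q q w x0 x1
         \<le> (real CARD('n) - 1) * Jhat \<alpha> \<beta> \<gamma> \<sigma> m + Jhat \<alpha> \<beta> \<gamma> \<sigma> L)
   \<and> (\<exists>(Q, q) \<in> quad_class m L. noise_amp M \<alpha> \<beta> \<gamma> \<sigma> Q q w x0 x1
         = Jhat \<alpha> \<beta> \<gamma> \<sigma> m + Jhat \<alpha> \<beta> \<gamma> \<sigma> L
           + (real CARD('n) - 2) * Jhat \<alpha> \<beta> \<gamma> \<sigma> (1 / \<alpha>))
   \<and> (\<forall>(Q, q) \<in> quad_class m L. Jhat \<alpha> \<beta> \<gamma> \<sigma> m + Jhat \<alpha> \<beta> \<gamma> \<sigma> L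
           + (real CARD('n) - 2) * Jhat \<alpha> \<beta> \<gamma> \<sigma> (1 / \<alpha>)
         \<le> noise_amp M \<alpha> \<beta> \<gamma> \<sigma> Q q w x0 x1)
   \<and> Jhat \<alpha> \<beta> \<gamma> \<sigma> m = \<sigma>\<^sup>2 * (1 - c)\<^sup>2 * (r * \<kappa> + 1)
        / (2 * (1 - c - c * \<rho>\<^sup>2) * (1 + \<rho>) * (1 - c + c * \<rho>))
   \<and> Jhat \<alpha> \<beta> \<gamma> \<sigma> L = \<sigma>\<^sup>2 * (1 + c)\<^sup>2 * (1 + c - c * \<rho>\<^sup>2)
        / ((1 - \<rho>\<^sup>2) * (1 + c - c * \<rho>) * (1 + c + c * \<rho>) * (1 + c + c * \<rho>\<^sup>2))
   \<and> Jhat \<alpha> \<beta> \<gamma> \<sigma> (1 / \<alpha>) = \<sigma>\<^sup>2"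
proof -
  note params = tuned_parameters[OF mL kappa rho c_range c_eq alpha beta]
  note tuned = c_range rho params(2,1,3,4)
  have inv_\<alpha>: "m \<le> 1 / \<alpha>" "1 / \<alpha> \<le> L" and Lm: "m < L" using params(5,6) by linarith+
  have J_inv: "Jhat \<alpha> \<beta> \<beta> \<sigma> (1 / \<alpha>) = \<sigma>\<^sup>2" using params(1) by (simp add: Jhat_def)
  have J_min: "Jhat \<alpha> \<beta> \<beta> \<sigma> (1 / \<alpha>) \<le> Jhat \<alpha> \<beta> \<beta> \<sigma> lam" if "m \<le> lam" "lam \<le> L" for lam
    using tuned_Jhat_bounds(2)[OF tuned that] unfolding J_inv .
  have J_m: "Jhat \<alpha> \<beta> \<beta> \<sigma> m = \<sigma>\<^sup>2 * (1 - c)\<^sup>2 * (r * \<kappa> + 1)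
        / (2 * (1 - c - c * \<rho>\<^sup>2) * (1 + \<rho>) * (1 - c + c * \<rho>))"
    unfolding tuned_mode_Jhat(2)[OF tuned order_refl mL(2)]
      tuned_ratio_left_closed_form[OF c_range rho params(3) c_eq r_def] by (simp add: mult.assoc)
  have J_L: "Jhat \<alpha> \<beta> \<beta> \<sigma> L = \<sigma>\<^sup>2 * (1 + c)\<^sup>2 * (1 + c - c * \<rho>\<^sup>2)
        / ((1 - \<rho>\<^sup>2) * (1 + c - c * \<rho>) * (1 + c + c * \<rho>) * (1 + c + c * \<rho>\<^sup>2))"
    unfolding tuned_mode_Jhat(2)[OF tuned mL(2) order_refl]
      tuned_ratio_right_closed_form[OF c_range rho params(4)] by (simp add: mult.assoc)
  show ?thesis
    unfolding gamma
    using noise_amp_extremes[OF n2 mL(1) Lm noise tuned_mode_Jhat(1)[OF tuned] tuned_Jhat_bounds(1)[OF tuned]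
        inv_\<alpha> J_min] J_m J_L J_inv
    by simp
qed

end
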